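(* Let $A$ be a commutative noetherian ring and $\operatorname{mod} A$ the category of finitely generated $A$-modules. The map $\mathcal D\mapsto\operatorname{Ass}\mathcal D=\bigcup_{M\in\mathcal D}\operatorname{Ass} M$ induces a bijection between the set of full subcategories of $\operatorname{mod} A$ closed under submodules and extensions, and the set of all subsets of $\operatorname{Spec} A$.
   Context: $\operatorname{Ass} M$ is the set of associated primes of $M$. *)

theory Defs
  imports "HOL-Algebra.Algebra"
begin

definition fg_module :: "('a, 'c) ring_scheme \<Rightarrow> ('a, 'b) module \<Rightarrow> bool" where
  "fg_module A M \<longleftrightarrow> (\<exists>S. finite S \<and> S \<subseteq> carrier M \<and>
     carrier M = {finsum M (\<lambda>s. c s \<odot>\<^bsub>M\<^esub> s) S | c. c \<in> S \<rightarrow> carrier A})"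

definition mod_hom :: "('a, 'c) ring_scheme \<Rightarrow> ('a, 'b) module \<Rightarrow> ('a, 'd) module \<Rightarrow> ('b \<Rightarrow> 'd) \<Rightarrow> bool" where
  "mod_hom A M N f \<longleftrightarrow> f \<in> carrier M \<rightarrow> carrier N \<and>
     (\<forall>x\<in>carrier M. \<forall>y\<in>carrier M. f (x \<oplus>\<^bsub>M\<^esub> y) = f x \<oplus>\<^bsub>N\<^esub> f y) \<and>
     (\<forall>a\<in>carrier A. \<forall>x\<in>carrier M. f (a \<odot>\<^bsub>M\<^esub> x) = a \<odot>\<^bsub>N\<^esub> f x)"

definition mod_iso :: "('a, 'c) ring_scheme \<Rightarrow> ('a, 'b) module \<Rightarrow> ('a, 'd) module \<Rightarrow> ('b \<Rightarrow> 'd) \<Rightarrow> bool" where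
  "mod_iso A M N f \<longleftrightarrow> mod_hom A M N f \<and> bij_betw f (carrier M) (carrier N)"

definition short_exact :: "('a, 'c) ring_scheme \<Rightarrow> ('a, 'b) module \<Rightarrow> ('a, 'd) module \<Rightarrow> ('a, 'e) module
    \<Rightarrow> ('b \<Rightarrow> 'd) \<Rightarrow> ('d \<Rightarrow> 'e) \<Rightarrow> bool" where
  "short_exact A L M N f g \<longleftrightarrow> mod_hom A L M f \<and> inj_on f (carrier L) \<and>
     mod_hom A M N g \<and> g ` carrier M = carrier N \<and>
     f ` carrier L = {x \<in> carrier M. g x = \<zero>\<^bsub>N\<^esub>}"

definition Ass :: "('a, 'c) ring_scheme \<Rightarrow> ('a, 'b) module \<Rightarrow> 'a set set" where
  "Ass A M = {P. primeideal P A \<and>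
     (\<exists>x\<in>carrier M. P = {a \<in> carrier A. a \<odot>\<^bsub>M\<^esub> x = \<zero>\<^bsub>M\<^esub>})}"

definition Spec :: "('a, 'c) ring_scheme \<Rightarrow> 'a set set" where
  "Spec A = {P. primeideal P A}"

text \<open>Modules are represented on the carrier type 'a list set, which is large
  enough to contain an isomorphic copy of every finitely generated A-module
  (a quotient of A^n, elements = cosets of lists of length n).\<close>
type_synonym 'a fgmod = "('a, 'a list set) module"

definition sub_ext_closed :: "('a, 'c) ring_scheme \<Rightarrow> 'a fgmod set \<Rightarrow> bool" where
  "sub_ext_closed A D \<longleftrightarrow>
     D \<noteq> {} \<and>
     (\<forall>M\<in>D. module A M \<and> fg_module A M) \<and>
     (\<forall>M\<in>D. \<forall>N. module A N \<and> (\<exists>f. mod_iso A M N f) \<longrightarrow> N \<in> D) \<and>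
     (\<forall>M\<in>D. \<forall>H. submodule H A M \<longrightarrow> M\<lparr>carrier := H\<rparr> \<in> D) \<and>
     (\<forall>L\<in>D. \<forall>N\<in>D. \<forall>M. module A M \<and> fg_module A M \<and>
        (\<exists>f g. short_exact A L M N f g) \<longrightarrow> M \<in> D)"

end

theory Submission
  imports Defs
begin

text \<open>
  \<open>Ass\<close> is monotone on submodules, \<open>Ass M \<subseteq> Ass L \<union> Ass N\<close> for an extension
  \<open>0 \<rightarrow> L \<rightarrow> M \<rightarrow> N \<rightarrow> 0\<close>, and \<open>Ass (A/p) = {p}\<close>. Hence for \<open>\<Phi> \<subseteq> Spec A\<close> the finitely
  generated modules with \<open>Ass M \<subseteq> \<Phi>\<close> form a class closed under submodules and extensions whose
  associated primes are exactly \<open>\<Phi>\<close>.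

  Conversely, a class \<open>D\<close> closed under submodules and extensions contains every finitely generated
  \<open>M\<close> with \<open>Ass M \<subseteq> Ass D\<close>, so \<open>D\<close> is determined by \<open>Ass D\<close>. If \<open>p = ann x\<^sub>0\<close> for some \<open>x\<^sub>0\<close> in a
  module of \<open>D\<close>, then \<open>A x\<^sub>0 \<cong> A/p\<close> lies in \<open>D\<close>. A module killed by \<open>p\<close> in which every nonzero
  element has annihilator \<open>p\<close> is then built from copies of \<open>A/p\<close> one generator at a time. A module
  \<open>L\<close> with \<open>Ass L \<subseteq> {p}\<close> is exhausted by the submodules \<open>(0 :\<^sub>L p\<^sup>k)\<close>, and each step up this
  filtration is reached through the sequences \<open>0 \<rightarrow> (0 :\<^sub>H a) \<rightarrow> H \<rightarrow> a H \<rightarrow> 0\<close> for the generators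
  \<open>a\<close> of \<open>p\<close>. Finally a general \<open>M\<close> is an extension of such a \<open>p\<close>-coprimary quotient by a submodule
  with fewer associated primes.
\<close>

section \<open>Spans, cyclic extensions and colon ideals\<close>

definition span :: "('a,'c) ring_scheme \<Rightarrow> ('a,'b,'e) module_scheme \<Rightarrow> 'b set \<Rightarrow> 'b set" where
  "span R M S = {finsum M (\<lambda>s. c s \<odot>\<^bsub>M\<^esub> s) S | c. c \<in> S \<rightarrow> carrier R}"

definition plus_cyclic :: "('a,'c) ring_scheme \<Rightarrow> ('a,'b,'e) module_scheme \<Rightarrow> 'b set \<Rightarrow> 'b \<Rightarrow> 'b set" where
  "plus_cyclic R M N y = {n \<oplus>\<^bsub>M\<^esub> a \<odot>\<^bsub>M\<^esub> y | n a. n \<in> N \<and> a \<in> carrier R}"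

definition colon :: "('a,'c) ring_scheme \<Rightarrow> ('a,'b,'e) module_scheme \<Rightarrow> 'b set \<Rightarrow> 'b \<Rightarrow> 'a set" where
  "colon R M N x = {a \<in> carrier R. a \<odot>\<^bsub>M\<^esub> x \<in> N}"

lemma fg_module_iff_span: "fg_module R M \<longleftrightarrow> (\<exists>S. finite S \<and> S \<subseteq> carrier M \<and> carrier M = span R M S)"
  unfolding fg_module_def span_def by simp

context abelian_group
begin

lemma diff_self [simp]: "x \<in> carrier G \<Longrightarrow> x \<ominus> x = \<zero>"
  by (simp add: a_minus_def r_neg)

lemma diff_zero [simp]: "x \<in> carrier G \<Longrightarrow> x \<ominus> \<zero> = x"
  by (simp add: a_minus_def)

lemma diff_eq_zero_iff: "x \<in> carrier G \<Longrightarrow> y \<in> carrier G \<Longrightarrow> x \<ominus> y = \<zero> \<longleftrightarrow> x = y"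
  by (metis a_minus_def add.inv_closed add.inv_equality minus_minus diff_self r_neg1 a_comm)

lemma add_diff_cancel [simp]: "x \<in> carrier G \<Longrightarrow> y \<in> carrier G \<Longrightarrow> (x \<oplus> y) \<ominus> y = x"
  by (simp add: a_minus_def a_assoc r_neg)

lemma diff_add_cancel [simp]: "x \<in> carrier G \<Longrightarrow> y \<in> carrier G \<Longrightarrow> (x \<ominus> y) \<oplus> y = x"
  by (simp add: a_minus_def a_assoc l_neg)

lemma add_diff_add_right:
  assumes "x \<in> carrier G" "y \<in> carrier G" "z \<in> carrier G"
  shows "(x \<oplus> z) \<ominus> (y \<oplus> z) = x \<ominus> y"
  using assms by (simp add: a_minus_def minus_add a_ac r_neg)

lemma diff_add_diff:
  "x \<in> carrier G \<Longrightarrow> y \<in> carrier G \<Longrightarrow> x' \<in> carrier G \<Longrightarrow> y' \<in> carrier G \<Longrightarrow>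
    (x \<oplus> y) \<ominus> (x' \<oplus> y') = (x \<ominus> x') \<oplus> (y \<ominus> y')"
  by (simp add: a_minus_def minus_add a_ac)

lemma diff_add_diff_cancel:
  "x \<in> carrier G \<Longrightarrow> y \<in> carrier G \<Longrightarrow> z \<in> carrier G \<Longrightarrow> (x \<ominus> y) \<oplus> (y \<ominus> z) = x \<ominus> z"
  by (simp add: a_minus_def a_assoc r_neg1)

lemma minus_diff: "x \<in> carrier G \<Longrightarrow> y \<in> carrier G \<Longrightarrow> \<ominus> (x \<ominus> y) = y \<ominus> x"
  by (simp add: a_minus_def minus_add a_comm)

lemma diff_diff_cancel_left:
  "x \<in> carrier G \<Longrightarrow> y \<in> carrier G \<Longrightarrow> z \<in> carrier G \<Longrightarrow> (x \<ominus> y) \<ominus> (x \<ominus> z) = z \<ominus> y"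
proof -
  assume xyz: "x \<in> carrier G" "y \<in> carrier G" "z \<in> carrier G"
  then have "(x \<ominus> y) \<ominus> (x \<ominus> z) = (x \<ominus> y) \<oplus> (z \<ominus> x)"
    by (subst minus_eq) (simp add: minus_diff)
  also have "\<dots> = (z \<ominus> x) \<oplus> (x \<ominus> y)" using xyz by (simp add: a_comm)
  also have "\<dots> = z \<ominus> y" using xyz by (simp add: diff_add_diff_cancel)
  finally show ?thesis .
qed

end

context module
begin

lemma submodule_zero: "submodule H R M \<Longrightarrow> \<zero>\<^bsub>M\<^esub> \<in> H"
  using subgroup.one_closed[OF submodule.axioms(1)] by fastforce

lemma zero_submodule: "submodule {\<zero>\<^bsub>M\<^esub>} R M"
  by (rule submoduleI) auto

lemma submodule_diff: "submodule N R M \<Longrightarrow> x \<in> N \<Longrightarrow> y \<in> N \<Longrightarrow> x \<ominus>\<^bsub>M\<^esub> y \<in> N"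
  unfolding a_minus_def using submoduleE(3,5) by blast

lemma submodule_Int: "submodule H R M \<Longrightarrow> submodule K R M \<Longrightarrow> submodule (H \<inter> K) R M"
  using submoduleE submodule_zero by (intro submoduleI) auto

lemma submodule_finsum:
  assumes H: "submodule H R M" and fin: "finite I" and f: "f \<in> I \<rightarrow> H"
  shows "finsum M f I \<in> H"
  using fin f
proof (induct I rule: finite_induct)
  case empty
  then show ?case using submodule_zero[OF H] by simp
next
  case (insert x F)
  then have "f \<in> F \<rightarrow> carrier M" "f x \<in> carrier M" using submoduleE(1)[OF H] by auto
  then show ?case using insert submoduleE(5)[OF H] by (simp add: finsum_insert)
qed

lemma smult_diff_right:
  "a \<in> carrier R \<Longrightarrow> x \<in> carrier M \<Longrightarrow> y \<in> carrier M \<Longrightarrow> a \<odot>\<^bsub>M\<^esub> (x \<ominus>\<^bsub>M\<^esub> y) = a \<odot>\<^bsub>M\<^esub> x \<ominus>\<^bsub>M\<^esub> a \<odot>\<^bsub>M\<^esub> y"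
  by (simp add: a_minus_def smult_r_distr smult_r_minus)

lemma smult_diff_left:
  "a \<in> carrier R \<Longrightarrow> b \<in> carrier R \<Longrightarrow> x \<in> carrier M \<Longrightarrow> (a \<ominus> b) \<odot>\<^bsub>M\<^esub> x = a \<odot>\<^bsub>M\<^esub> x \<ominus>\<^bsub>M\<^esub> b \<odot>\<^bsub>M\<^esub> x"
  by (simp add: a_minus_def smult_l_distr smult_l_minus)

lemma smult_comm: "a \<in> carrier R \<Longrightarrow> b \<in> carrier R \<Longrightarrow> x \<in> carrier M \<Longrightarrow> a \<odot>\<^bsub>M\<^esub> (b \<odot>\<^bsub>M\<^esub> x) = b \<odot>\<^bsub>M\<^esub> (a \<odot>\<^bsub>M\<^esub> x)"
  by (simp add: smult_assoc1[symmetric] R.m_comm)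

lemma lincomb_add:
  assumes S: "finite S" "S \<subseteq> carrier M" and c: "c \<in> S \<rightarrow> carrier R" and d: "d \<in> S \<rightarrow> carrier R"
  shows "finsum M (\<lambda>s. c s \<odot>\<^bsub>M\<^esub> s) S \<oplus>\<^bsub>M\<^esub> finsum M (\<lambda>s. d s \<odot>\<^bsub>M\<^esub> s) S
    = finsum M (\<lambda>s. (c s \<oplus> d s) \<odot>\<^bsub>M\<^esub> s) S"
proof -
  have "finsum M (\<lambda>s. c s \<odot>\<^bsub>M\<^esub> s) S \<oplus>\<^bsub>M\<^esub> finsum M (\<lambda>s. d s \<odot>\<^bsub>M\<^esub> s) S
      = finsum M (\<lambda>s. c s \<odot>\<^bsub>M\<^esub> s \<oplus>\<^bsub>M\<^esub> d s \<odot>\<^bsub>M\<^esub> s) S"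
    using S c d by (intro finsum_addf[symmetric]) auto
  also have "\<dots> = finsum M (\<lambda>s. (c s \<oplus> d s) \<odot>\<^bsub>M\<^esub> s) S"
    using S c d by (intro finsum_cong') (auto simp: smult_l_distr Pi_iff subset_iff)
  finally show ?thesis .
qed

lemma smult_lincomb:
  assumes S: "finite S" "S \<subseteq> carrier M" and c: "c \<in> S \<rightarrow> carrier R" and a: "a \<in> carrier R"
  shows "a \<odot>\<^bsub>M\<^esub> finsum M (\<lambda>s. c s \<odot>\<^bsub>M\<^esub> s) S = finsum M (\<lambda>s. (a \<otimes> c s) \<odot>\<^bsub>M\<^esub> s) S"
proof -
  have "a \<odot>\<^bsub>M\<^esub> finsum M (\<lambda>s. c s \<odot>\<^bsub>M\<^esub> s) S = finsum M (\<lambda>s. a \<odot>\<^bsub>M\<^esub> (c s \<odot>\<^bsub>M\<^esub> s)) S"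
    using S c a by (intro finsum_smult_ldistr) auto
  also have "\<dots> = finsum M (\<lambda>s. (a \<otimes> c s) \<odot>\<^bsub>M\<^esub> s) S"
    using S c a by (intro finsum_cong') (auto simp: smult_assoc1 Pi_iff subset_iff)
  finally show ?thesis .
qed

lemma span_submodule:
  assumes S: "finite S" "S \<subseteq> carrier M"
  shows "submodule (span R M S) R M"
proof (rule submoduleI)
  let ?lc = "\<lambda>c. finsum M (\<lambda>s. c s \<odot>\<^bsub>M\<^esub> s) S"
  have lc_closed: "?lc c \<in> carrier M" if "c \<in> S \<rightarrow> carrier R" for c
    using that S by (intro finsum_closed) auto
  show "span R M S \<subseteq> carrier M" unfolding span_def using lc_closed by auto
  have "\<zero>\<^bsub>M\<^esub> = \<zero> \<odot>\<^bsub>M\<^esub> ?lc (\<lambda>_. \<zero>)" using lc_closed[of "\<lambda>_. \<zero>"] by simp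
  then show "\<zero>\<^bsub>M\<^esub> \<in> span R M S"
    unfolding span_def using smult_lincomb[OF S, of "\<lambda>_. \<zero>" \<zero>] by (auto intro!: exI[of _ "\<lambda>_. \<zero>"])
next
  fix x assume "x \<in> span R M S"
  then obtain c where c: "c \<in> S \<rightarrow> carrier R" and x: "x = finsum M (\<lambda>s. c s \<odot>\<^bsub>M\<^esub> s) S"
    unfolding span_def by auto
  have "\<ominus>\<^bsub>M\<^esub> x = (\<ominus> \<one>) \<odot>\<^bsub>M\<^esub> x" using c x S by (simp add: smult_l_minus finsum_closed Pi_iff subset_iff)
  then show "\<ominus>\<^bsub>M\<^esub> x \<in> span R M S"
    unfolding span_def using x c smult_lincomb[OF S c, of "\<ominus> \<one>"]
    by (auto intro!: exI[of _ "\<lambda>s. \<ominus> \<one> \<otimes> c s"])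
next
  fix x y assume "x \<in> span R M S" "y \<in> span R M S"
  then obtain c d where "c \<in> S \<rightarrow> carrier R" "x = finsum M (\<lambda>s. c s \<odot>\<^bsub>M\<^esub> s) S"
    "d \<in> S \<rightarrow> carrier R" "y = finsum M (\<lambda>s. d s \<odot>\<^bsub>M\<^esub> s) S"
    unfolding span_def by auto
  then show "x \<oplus>\<^bsub>M\<^esub> y \<in> span R M S"
    unfolding span_def using lincomb_add[OF S] by (auto intro!: exI[of _ "\<lambda>s. c s \<oplus> d s"])
next
  fix a x assume a: "a \<in> carrier R" and "x \<in> span R M S"
  then obtain c where "c \<in> S \<rightarrow> carrier R" "x = finsum M (\<lambda>s. c s \<odot>\<^bsub>M\<^esub> s) S" unfolding span_def by auto
  then show "a \<odot>\<^bsub>M\<^esub> x \<in> span R M S"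
    unfolding span_def using a smult_lincomb[OF S] by (auto intro!: exI[of _ "\<lambda>s. a \<otimes> c s"])
qed

lemma span_superset:
  assumes S: "finite S" "S \<subseteq> carrier M"
  shows "S \<subseteq> span R M S"
proof
  fix t assume t: "t \<in> S"
  define c where "c = (\<lambda>s. if s = t then \<one> else \<zero>)"
  have c: "c \<in> S \<rightarrow> carrier R" unfolding c_def by auto
  have "finsum M (\<lambda>s. c s \<odot>\<^bsub>M\<^esub> s) S = c t \<odot>\<^bsub>M\<^esub> t \<oplus>\<^bsub>M\<^esub> finsum M (\<lambda>s. c s \<odot>\<^bsub>M\<^esub> s) (S - {t})"
    using S c t by (subst insert_Diff[OF t, symmetric], intro finsum_insert) auto
  also have "finsum M (\<lambda>s. c s \<odot>\<^bsub>M\<^esub> s) (S - {t}) = finsum M (\<lambda>s. \<zero>\<^bsub>M\<^esub>) (S - {t})"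
    using S by (intro finsum_cong') (auto simp: c_def)
  finally have "finsum M (\<lambda>s. c s \<odot>\<^bsub>M\<^esub> s) S = t" using S t by (auto simp: c_def)
  then show "t \<in> span R M S" unfolding span_def using c by blast
qed

lemma span_minimal:
  assumes "finite S" "submodule H R M" "S \<subseteq> H"
  shows "span R M S \<subseteq> H"
  unfolding span_def using assms submoduleE(1)[OF assms(2)]
  by (auto intro!: submodule_finsum submoduleE(4)[OF assms(2)])

lemma span_empty [simp]: "span R M {} = {\<zero>\<^bsub>M\<^esub>}"
  unfolding span_def by auto

lemma plus_cyclic_submodule:
  assumes N: "submodule N R M" and y: "y \<in> carrier M"
  shows "submodule (plus_cyclic R M N y) R M"
proof -
  have NM: "N \<subseteq> carrier M" using submoduleE(1)[OF N] .
  show ?thesis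
  proof (rule submoduleI)
    show "plus_cyclic R M N y \<subseteq> carrier M" unfolding plus_cyclic_def using NM y by auto
    have "\<zero>\<^bsub>M\<^esub> = \<zero>\<^bsub>M\<^esub> \<oplus>\<^bsub>M\<^esub> \<zero> \<odot>\<^bsub>M\<^esub> y" using y by simp
    then show "\<zero>\<^bsub>M\<^esub> \<in> plus_cyclic R M N y" unfolding plus_cyclic_def using submodule_zero[OF N] by blast
  next
    fix x assume "x \<in> plus_cyclic R M N y"
    then obtain n a where n: "n \<in> N" and a: "a \<in> carrier R" and x: "x = n \<oplus>\<^bsub>M\<^esub> a \<odot>\<^bsub>M\<^esub> y"
      unfolding plus_cyclic_def by auto
    have "\<ominus>\<^bsub>M\<^esub> x = \<ominus>\<^bsub>M\<^esub> n \<oplus>\<^bsub>M\<^esub> (\<ominus> a) \<odot>\<^bsub>M\<^esub> y"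
      using n NM a y by (auto simp: x smult_l_minus M.minus_add M.a_comm)
    then show "\<ominus>\<^bsub>M\<^esub> x \<in> plus_cyclic R M N y"
      unfolding plus_cyclic_def using submoduleE(3)[OF N n] a by blast
  next
    fix x z assume "x \<in> plus_cyclic R M N y" "z \<in> plus_cyclic R M N y"
    then obtain n a n' a' where n: "n \<in> N" "n' \<in> N" and a: "a \<in> carrier R" "a' \<in> carrier R"
      and x: "x = n \<oplus>\<^bsub>M\<^esub> a \<odot>\<^bsub>M\<^esub> y" and z: "z = n' \<oplus>\<^bsub>M\<^esub> a' \<odot>\<^bsub>M\<^esub> y"
      unfolding plus_cyclic_def by blast
    have "x \<oplus>\<^bsub>M\<^esub> z = (n \<oplus>\<^bsub>M\<^esub> n') \<oplus>\<^bsub>M\<^esub> (a \<oplus> a') \<odot>\<^bsub>M\<^esub> y"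
      using n NM a y by (simp add: x z smult_l_distr M.a_ac subset_iff)
    then show "x \<oplus>\<^bsub>M\<^esub> z \<in> plus_cyclic R M N y"
      unfolding plus_cyclic_def using submoduleE(5)[OF N n] a by blast
  next
    fix b x assume b: "b \<in> carrier R" and "x \<in> plus_cyclic R M N y"
    then obtain n a where n: "n \<in> N" and a: "a \<in> carrier R" and x: "x = n \<oplus>\<^bsub>M\<^esub> a \<odot>\<^bsub>M\<^esub> y"
      unfolding plus_cyclic_def by auto
    have "b \<odot>\<^bsub>M\<^esub> x = b \<odot>\<^bsub>M\<^esub> n \<oplus>\<^bsub>M\<^esub> (b \<otimes> a) \<odot>\<^bsub>M\<^esub> y"
      using n NM a b y by (auto simp: x smult_r_distr smult_assoc1)
    then show "b \<odot>\<^bsub>M\<^esub> x \<in> plus_cyclic R M N y"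
      unfolding plus_cyclic_def using submoduleE(4)[OF N b n] a b by blast
  qed
qed

lemma plus_cyclic_superset:
  assumes N: "submodule N R M" and y: "y \<in> carrier M"
  shows "N \<subseteq> plus_cyclic R M N y" "y \<in> plus_cyclic R M N y"
proof -
  show "N \<subseteq> plus_cyclic R M N y"
  proof
    fix n assume n: "n \<in> N"
    have "n = n \<oplus>\<^bsub>M\<^esub> \<zero> \<odot>\<^bsub>M\<^esub> y" using n submoduleE(1)[OF N] y by auto
    then show "n \<in> plus_cyclic R M N y" unfolding plus_cyclic_def using n by blast
  qed
  have "y = \<zero>\<^bsub>M\<^esub> \<oplus>\<^bsub>M\<^esub> \<one> \<odot>\<^bsub>M\<^esub> y" using y by simp
  then show "y \<in> plus_cyclic R M N y" unfolding plus_cyclic_def using submodule_zero[OF N] by blast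
qed

lemma span_insert:
  assumes S: "finite S" "S \<subseteq> carrier M" and s: "s \<in> carrier M"
  shows "span R M (insert s S) = plus_cyclic R M (span R M S) s"
proof
  have sub: "submodule (span R M S) R M" using span_submodule[OF S] .
  have "insert s S \<subseteq> plus_cyclic R M (span R M S) s"
    using plus_cyclic_superset[OF sub s] span_superset[OF S] by auto
  then show "span R M (insert s S) \<subseteq> plus_cyclic R M (span R M S) s"
    using span_minimal plus_cyclic_submodule[OF sub s] S by simp
  have sub': "submodule (span R M (insert s S)) R M" and s': "insert s S \<subseteq> span R M (insert s S)"
    using span_submodule[of "insert s S"] span_superset[of "insert s S"] S s by auto
  then have "span R M S \<subseteq> span R M (insert s S)" using span_minimal[OF S(1) sub'] by auto
  then show "plus_cyclic R M (span R M S) s \<subseteq> span R M (insert s S)"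
    unfolding plus_cyclic_def using s' submoduleE(4,5)[OF sub'] by blast
qed

lemma submodule_carrier_update_iff:
  assumes H: "submodule H R M"
  shows "submodule W R (M\<lparr>carrier := H\<rparr>) \<longleftrightarrow> submodule W R M \<and> W \<subseteq> H"
proof -
  interpret MH: module R "M\<lparr>carrier := H\<rparr>"
    using submodule.submodule_is_module[OF H] module_axioms by auto
  have HM: "H \<subseteq> carrier M" using submoduleE(1)[OF H] .
  have neg: "\<ominus>\<^bsub>M\<lparr>carrier := H\<rparr>\<^esub> x = \<ominus>\<^bsub>M\<^esub> x" if "x \<in> H" for x
  proof -
    have "\<ominus>\<^bsub>M\<lparr>carrier := H\<rparr>\<^esub> x \<in> H" "\<ominus>\<^bsub>M\<lparr>carrier := H\<rparr>\<^esub> x \<oplus>\<^bsub>M\<^esub> x = \<zero>\<^bsub>M\<^esub>"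
      using that MH.a_inv_closed MH.l_neg[of x] by auto
    then show ?thesis using that HM by (metis M.add.inv_equality subsetD)
  qed
  show ?thesis
  proof
    assume W: "submodule W R (M\<lparr>carrier := H\<rparr>)"
    have WH: "W \<subseteq> H" using MH.submoduleE(1)[OF W] by simp
    have "submodule W R M"
    proof (rule submoduleI)
      show "W \<subseteq> carrier M" using WH HM by auto
      show "\<zero>\<^bsub>M\<^esub> \<in> W" using MH.submodule_zero[OF W] by simp
      show "\<ominus>\<^bsub>M\<^esub> a \<in> W" if "a \<in> W" for a using MH.submoduleE(3)[OF W that] neg[of a] that WH by auto
      show "a \<oplus>\<^bsub>M\<^esub> b \<in> W" if "a \<in> W" "b \<in> W" for a b using MH.submoduleE(5)[OF W that] by simp
      show "a \<odot>\<^bsub>M\<^esub> x \<in> W" if "a \<in> carrier R" "x \<in> W" for a x using MH.submoduleE(4)[OF W that] by simp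
    qed
    then show "submodule W R M \<and> W \<subseteq> H" using WH by simp
  next
    assume W: "submodule W R M \<and> W \<subseteq> H"
    show "submodule W R (M\<lparr>carrier := H\<rparr>)"
    proof (rule MH.submoduleI)
      show "W \<subseteq> carrier (M\<lparr>carrier := H\<rparr>)" using W by simp
      show "\<zero>\<^bsub>M\<lparr>carrier := H\<rparr>\<^esub> \<in> W" using submodule_zero W by simp
      show "\<ominus>\<^bsub>M\<lparr>carrier := H\<rparr>\<^esub> a \<in> W" if "a \<in> W" for a using submoduleE(3) W that neg[of a] by auto
      show "a \<oplus>\<^bsub>M\<lparr>carrier := H\<rparr>\<^esub> b \<in> W" if "a \<in> W" "b \<in> W" for a b using submoduleE(5) W that by simp
      show "a \<odot>\<^bsub>M\<lparr>carrier := H\<rparr>\<^esub> x \<in> W" if "a \<in> carrier R" "x \<in> W" for a x using submoduleE(4) W that by simp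
    qed
  qed
qed

lemma span_carrier_update:
  assumes H: "submodule H R M" and S: "finite S" "S \<subseteq> H"
  shows "span R (M\<lparr>carrier := H\<rparr>) S = span R M S"
proof -
  interpret MH: module R "M\<lparr>carrier := H\<rparr>"
    using submodule.submodule_is_module[OF H] module_axioms by auto
  have SM: "S \<subseteq> carrier M" using S submoduleE(1)[OF H] by auto
  have S': "S \<subseteq> carrier (M\<lparr>carrier := H\<rparr>)" using S by simp
  have sub: "submodule (span R (M\<lparr>carrier := H\<rparr>) S) R M"
    using MH.span_submodule[OF S(1) S'] submodule_carrier_update_iff[OF H] by auto
  have sub': "submodule (span R M S) R (M\<lparr>carrier := H\<rparr>)"
    using submodule_carrier_update_iff[OF H] span_submodule[OF S(1) SM] span_minimal[OF S(1) H S(2)] by auto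
  show ?thesis
    using MH.span_minimal[OF S(1) sub'] span_minimal[OF S(1) sub]
      span_superset[OF S(1) SM] MH.span_superset[OF S(1) S'] by auto
qed

lemma finsum_smult_rdistr:
  assumes "finite G" "r \<in> G \<rightarrow> carrier R" "s \<in> carrier M"
  shows "finsum R r G \<odot>\<^bsub>M\<^esub> s = finsum M (\<lambda>g. r g \<odot>\<^bsub>M\<^esub> s) G"
  using assms
proof (induct G rule: finite_induct)
  case (insert x F)
  then have "finsum M (\<lambda>g. r g \<odot>\<^bsub>M\<^esub> s) (insert x F) = r x \<odot>\<^bsub>M\<^esub> s \<oplus>\<^bsub>M\<^esub> finsum M (\<lambda>g. r g \<odot>\<^bsub>M\<^esub> s) F"
    by (intro finsum_insert) auto
  with insert show ?case by (simp add: R.finsum_insert smult_l_distr)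
qed simp

lemma smult_image_submodule:
  assumes H: "submodule H R M" and c: "c \<in> carrier R"
  shows "submodule ((\<lambda>z. c \<odot>\<^bsub>M\<^esub> z) ` H) R M"
proof -
  have HM: "H \<subseteq> carrier M" using submoduleE(1)[OF H] .
  show ?thesis
  proof (rule submoduleI)
    have "\<zero>\<^bsub>M\<^esub> = c \<odot>\<^bsub>M\<^esub> \<zero>\<^bsub>M\<^esub>" using c by simp
    then show "\<zero>\<^bsub>M\<^esub> \<in> (\<lambda>z. c \<odot>\<^bsub>M\<^esub> z) ` H" using submodule_zero[OF H] by blast
  next
    fix u assume "u \<in> (\<lambda>z. c \<odot>\<^bsub>M\<^esub> z) ` H"
    then obtain z where z: "z \<in> H" "u = c \<odot>\<^bsub>M\<^esub> z" by auto
    then have "\<ominus>\<^bsub>M\<^esub> u = c \<odot>\<^bsub>M\<^esub> (\<ominus>\<^bsub>M\<^esub> z)" using HM c by (auto simp: smult_r_minus)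
    then show "\<ominus>\<^bsub>M\<^esub> u \<in> (\<lambda>z. c \<odot>\<^bsub>M\<^esub> z) ` H" using submoduleE(3)[OF H z(1)] by blast
  next
    fix u v assume "u \<in> (\<lambda>z. c \<odot>\<^bsub>M\<^esub> z) ` H" "v \<in> (\<lambda>z. c \<odot>\<^bsub>M\<^esub> z) ` H"
    then obtain z w where zw: "z \<in> H" "w \<in> H" "u = c \<odot>\<^bsub>M\<^esub> z" "v = c \<odot>\<^bsub>M\<^esub> w" by auto
    then have "u \<oplus>\<^bsub>M\<^esub> v = c \<odot>\<^bsub>M\<^esub> (z \<oplus>\<^bsub>M\<^esub> w)" using HM c by (auto simp: smult_r_distr subset_iff)
    then show "u \<oplus>\<^bsub>M\<^esub> v \<in> (\<lambda>z. c \<odot>\<^bsub>M\<^esub> z) ` H" using submoduleE(5)[OF H zw(1,2)] by blast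
  next
    fix b u assume b: "b \<in> carrier R" and "u \<in> (\<lambda>z. c \<odot>\<^bsub>M\<^esub> z) ` H"
    then obtain z where z: "z \<in> H" "u = c \<odot>\<^bsub>M\<^esub> z" by auto
    then have "b \<odot>\<^bsub>M\<^esub> u = c \<odot>\<^bsub>M\<^esub> (b \<odot>\<^bsub>M\<^esub> z)" using HM b c smult_comm by auto
    then show "b \<odot>\<^bsub>M\<^esub> u \<in> (\<lambda>z. c \<odot>\<^bsub>M\<^esub> z) ` H" using submoduleE(4)[OF H b z(1)] by blast
  qed (use HM c in auto)
qed

lemma annihilated_submodule:
  assumes H: "submodule H R M" and G: "G \<subseteq> carrier R"
  shows "submodule {z \<in> H. \<forall>a\<in>G. a \<odot>\<^bsub>M\<^esub> z = \<zero>\<^bsub>M\<^esub>} R M"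
proof -
  have HM: "H \<subseteq> carrier M" using submoduleE(1)[OF H] .
  show ?thesis
  proof (rule submoduleI)
    show "\<zero>\<^bsub>M\<^esub> \<in> {z \<in> H. \<forall>a\<in>G. a \<odot>\<^bsub>M\<^esub> z = \<zero>\<^bsub>M\<^esub>}" using submodule_zero[OF H] G by auto
  next
    fix z assume "z \<in> {z \<in> H. \<forall>a\<in>G. a \<odot>\<^bsub>M\<^esub> z = \<zero>\<^bsub>M\<^esub>}"
    then show "\<ominus>\<^bsub>M\<^esub> z \<in> {z \<in> H. \<forall>a\<in>G. a \<odot>\<^bsub>M\<^esub> z = \<zero>\<^bsub>M\<^esub>}"
      using submoduleE(3)[OF H] HM G by (auto simp: smult_r_minus subset_iff)
  next
    fix z w assume "z \<in> {z \<in> H. \<forall>a\<in>G. a \<odot>\<^bsub>M\<^esub> z = \<zero>\<^bsub>M\<^esub>}" "w \<in> {z \<in> H. \<forall>a\<in>G. a \<odot>\<^bsub>M\<^esub> z = \<zero>\<^bsub>M\<^esub>}"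
    then show "z \<oplus>\<^bsub>M\<^esub> w \<in> {z \<in> H. \<forall>a\<in>G. a \<odot>\<^bsub>M\<^esub> z = \<zero>\<^bsub>M\<^esub>}"
      using submoduleE(5)[OF H] HM G by (auto simp: smult_r_distr subset_iff)
  next
    fix b z assume "b \<in> carrier R" "z \<in> {z \<in> H. \<forall>a\<in>G. a \<odot>\<^bsub>M\<^esub> z = \<zero>\<^bsub>M\<^esub>}"
    then show "b \<odot>\<^bsub>M\<^esub> z \<in> {z \<in> H. \<forall>a\<in>G. a \<odot>\<^bsub>M\<^esub> z = \<zero>\<^bsub>M\<^esub>}"
      using submoduleE(4)[OF H] HM G smult_comm[of _ b z] by (auto simp: subset_iff)
  qed (use HM in auto)
qed

lemma smult_plus_cyclic_subset:
  assumes N: "submodule N R M" and y: "y \<in> carrier M" and c: "c \<in> carrier R" "c \<odot>\<^bsub>M\<^esub> y \<in> N"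
  shows "(\<lambda>z. c \<odot>\<^bsub>M\<^esub> z) ` plus_cyclic R M N y \<subseteq> N"
proof
  fix u assume "u \<in> (\<lambda>z. c \<odot>\<^bsub>M\<^esub> z) ` plus_cyclic R M N y"
  then obtain n a where n: "n \<in> N" and a: "a \<in> carrier R" and u: "u = c \<odot>\<^bsub>M\<^esub> (n \<oplus>\<^bsub>M\<^esub> a \<odot>\<^bsub>M\<^esub> y)"
    unfolding plus_cyclic_def by auto
  have "u = c \<odot>\<^bsub>M\<^esub> n \<oplus>\<^bsub>M\<^esub> a \<odot>\<^bsub>M\<^esub> (c \<odot>\<^bsub>M\<^esub> y)"
    using n submoduleE(1)[OF N] a c y by (auto simp: u smult_r_distr smult_comm)
  then show "u \<in> N" using submoduleE(4,5)[OF N] n a c by simp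
qed

end

lemma fg_submodule_iff_span:
  assumes M: "module R M" and H: "submodule H R M"
  shows "fg_module R (M\<lparr>carrier := H\<rparr>) \<longleftrightarrow> (\<exists>S. finite S \<and> S \<subseteq> H \<and> H = span R M S)"
  unfolding fg_module_iff_span using module.span_carrier_update[OF M H] by auto

section \<open>The ring as a module over itself\<close>

definition selfmod :: "('a,'c) ring_scheme \<Rightarrow> ('a,'a) module" where
  "selfmod R = \<lparr>carrier = carrier R, monoid.mult = monoid.mult R, one = one R,
     ring.zero = ring.zero R, ring.add = ring.add R, smult = monoid.mult R\<rparr>"

lemma selfmod_simps [simp]:
  "carrier (selfmod R) = carrier R" "ring.zero (selfmod R) = ring.zero R"
  "ring.add (selfmod R) = ring.add R" "smult (selfmod R) = monoid.mult R"
  by (simp_all add: selfmod_def)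

lemma finsum_selfmod: "finsum (selfmod R) = finsum R"
  by (intro ext) (simp add: finsum_def finprod_def selfmod_def)

lemma a_inv_selfmod: "a_inv (selfmod R) = a_inv R"
  by (intro ext) (simp add: a_inv_def m_inv_def selfmod_def)

lemma (in cring) selfmod_module: "module R (selfmod R)"
proof -
  have "abelian_group (selfmod R)"
    by (rule abelian_groupI) (auto simp: a_ac)
  then show ?thesis
    by (rule moduleI[OF is_cring]) (auto simp: l_distr r_distr m_assoc)
qed

lemma (in cring) selfmod_fg: "fg_module R (selfmod R)"
proof -
  interpret S: module R "selfmod R" by (rule selfmod_module)
  have one: "finite {\<one>}" "{\<one>} \<subseteq> carrier (selfmod R)" by auto
  have "a \<in> span R (selfmod R) {\<one>}" if "a \<in> carrier R" for a
    using S.submoduleE(4)[OF S.span_submodule[OF one], of a \<one>] S.span_superset[OF one] that by simp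
  then have "carrier (selfmod R) = span R (selfmod R) {\<one>}"
    using S.submoduleE(1)[OF S.span_submodule[OF one]] by auto
  then show ?thesis unfolding fg_module_iff_span using one by blast
qed

lemma (in cring) ideal_iff_submodule_selfmod: "ideal I R \<longleftrightarrow> submodule I R (selfmod R)"
proof
  interpret S: module R "selfmod R" by (rule selfmod_module)
  show "submodule I R (selfmod R)" if "ideal I R"
  proof -
    interpret ideal I R by fact
    show ?thesis by (rule S.submoduleI) (auto simp: a_inv_selfmod I_l_closed a_inv_closed)
  qed
  assume I: "submodule I R (selfmod R)"
  have "subgroup I (add_monoid R)"
    by (rule add.subgroupI) (use S.submoduleE[OF I] in \<open>auto simp: a_inv_selfmod\<close>)
  moreover have "x \<otimes> a \<in> I" "a \<otimes> x \<in> I" if "a \<in> I" "x \<in> carrier R" for a x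
    using S.submoduleE(1)[OF I] S.submoduleE(4)[OF I, of x a] that m_comm[of a x] by auto
  ultimately show "ideal I R"
    by (intro idealI[OF ring_axioms]) auto
qed

lemma (in cring) genideal_finsum:
  assumes G: "finite G" "G \<subseteq> carrier R" and a: "a \<in> Idl G"
  obtains r where "r \<in> G \<rightarrow> carrier R" "a = finsum R (\<lambda>g. r g \<otimes> g) G"
proof -
  interpret S: module R "selfmod R" by (rule selfmod_module)
  have "ideal (span R (selfmod R) G) R"
    using S.span_submodule[of G] G ideal_iff_submodule_selfmod by simp
  moreover have "G \<subseteq> span R (selfmod R) G" using S.span_superset[of G] G by simp
  ultimately have "a \<in> span R (selfmod R) G" using genideal_minimal a by blast
  then show ?thesis using that unfolding span_def finsum_selfmod by auto
qed

section \<open>Noetherian rings and modules\<close>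

lemma (in noetherian_ring) exists_maximal_ideal_in:
  assumes "Is \<noteq> {}" and "\<And>I. I \<in> Is \<Longrightarrow> ideal I R"
  obtains J where "J \<in> Is" "\<And>I. I \<in> Is \<Longrightarrow> J \<subseteq> I \<Longrightarrow> I = J"
proof -
  have "\<exists>J\<in>Is. \<forall>I\<in>Is. J \<subseteq> I \<longrightarrow> I = J"
  proof (rule Zorn_Lemma2, intro ballI)
    fix \<C> assume "\<C> \<in> chains Is"
    then have ch: "subset.chain {I. ideal I R} \<C>" and CI: "\<C> \<subseteq> Is"
      using assms(2) unfolding chains_def chain_subset_def subset.chain_def by blast+
    show "\<exists>U\<in>Is. \<forall>I\<in>\<C>. I \<subseteq> U"
    proof (cases "\<C> = {}")
      case False
      then show ?thesis using ideal_chain_is_trivial[OF False ch] CI by blast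
    qed (use assms(1) in auto)
  qed
  then show ?thesis using that by blast
qed

context module
begin

lemma coefficient_ideal:
  assumes H: "submodule H R M" and N: "submodule N R M" and s: "s \<in> carrier M"
  shows "ideal {a \<in> carrier R. \<exists>k\<in>N. k \<oplus>\<^bsub>M\<^esub> a \<odot>\<^bsub>M\<^esub> s \<in> H} R"
    (is "ideal ?I R")
proof -
  have NM: "N \<subseteq> carrier M" using submoduleE(1)[OF N] .
  have l_closed: "x \<otimes> a \<in> ?I" if aI: "a \<in> ?I" and x: "x \<in> carrier R" for a x
  proof -
    obtain k where k: "k \<in> N" "k \<oplus>\<^bsub>M\<^esub> a \<odot>\<^bsub>M\<^esub> s \<in> H" and a: "a \<in> carrier R" using aI by auto
    have "x \<odot>\<^bsub>M\<^esub> (k \<oplus>\<^bsub>M\<^esub> a \<odot>\<^bsub>M\<^esub> s) = x \<odot>\<^bsub>M\<^esub> k \<oplus>\<^bsub>M\<^esub> (x \<otimes> a) \<odot>\<^bsub>M\<^esub> s"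
      using k NM a s x by (auto simp: smult_r_distr smult_assoc1)
    then show ?thesis using submoduleE(4)[OF H x k(2)] submoduleE(4)[OF N x k(1)] x a by auto
  qed
  have r_closed: "a \<otimes> x \<in> ?I" if "a \<in> ?I" "x \<in> carrier R" for a x
    using l_closed[OF that] that R.m_comm[of a x] by auto
  have "subgroup ?I (add_monoid R)"
  proof (rule R.add.subgroupI)
    have "\<zero>\<^bsub>M\<^esub> \<oplus>\<^bsub>M\<^esub> \<zero> \<odot>\<^bsub>M\<^esub> s \<in> H" using s submodule_zero[OF H] by simp
    then show "?I \<noteq> {}" using submodule_zero[OF N] by blast
  next
    fix a assume "a \<in> ?I"
    then obtain k where k: "k \<in> N" "k \<oplus>\<^bsub>M\<^esub> a \<odot>\<^bsub>M\<^esub> s \<in> H" and a: "a \<in> carrier R" by auto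
    have "\<ominus>\<^bsub>M\<^esub> (k \<oplus>\<^bsub>M\<^esub> a \<odot>\<^bsub>M\<^esub> s) = \<ominus>\<^bsub>M\<^esub> k \<oplus>\<^bsub>M\<^esub> (\<ominus> a) \<odot>\<^bsub>M\<^esub> s"
      using k NM a s by (auto simp: smult_l_minus M.minus_add M.a_comm)
    then show "\<ominus> a \<in> ?I" using submoduleE(3)[OF H k(2)] submoduleE(3)[OF N k(1)] a by auto
  next
    fix a b assume "a \<in> ?I" "b \<in> ?I"
    then obtain k k' where k: "k \<in> N" "k \<oplus>\<^bsub>M\<^esub> a \<odot>\<^bsub>M\<^esub> s \<in> H" "k' \<in> N" "k' \<oplus>\<^bsub>M\<^esub> b \<odot>\<^bsub>M\<^esub> s \<in> H"
      and ab: "a \<in> carrier R" "b \<in> carrier R" by auto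
    have "(k \<oplus>\<^bsub>M\<^esub> a \<odot>\<^bsub>M\<^esub> s) \<oplus>\<^bsub>M\<^esub> (k' \<oplus>\<^bsub>M\<^esub> b \<odot>\<^bsub>M\<^esub> s) = (k \<oplus>\<^bsub>M\<^esub> k') \<oplus>\<^bsub>M\<^esub> (a \<oplus> b) \<odot>\<^bsub>M\<^esub> s"
      using k NM ab s by (simp add: smult_l_distr M.a_ac subset_iff)
    then show "a \<oplus> b \<in> ?I"
      using submoduleE(5)[OF H k(2) k(4)] submoduleE(5)[OF N k(1) k(3)] ab by auto
  qed auto
  then show ?thesis by (rule idealI[OF R.ring_axioms _ l_closed r_closed])
qed

lemma finsum_smult_plus_cyclic:
  assumes N: "submodule N R M" and s: "s \<in> carrier M" and G: "finite G" "G \<subseteq> carrier R"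
    and r: "r \<in> G \<rightarrow> carrier R" and k: "k \<in> G \<rightarrow> N"
  shows "\<exists>k'\<in>N. finsum M (\<lambda>g. r g \<odot>\<^bsub>M\<^esub> (k g \<oplus>\<^bsub>M\<^esub> g \<odot>\<^bsub>M\<^esub> s)) G
    = k' \<oplus>\<^bsub>M\<^esub> finsum R (\<lambda>g. r g \<otimes> g) G \<odot>\<^bsub>M\<^esub> s"
proof
  have kM: "k g \<in> carrier M" if "g \<in> G" for g using k that submoduleE(1)[OF N] by auto
  show "finsum M (\<lambda>g. r g \<odot>\<^bsub>M\<^esub> k g) G \<in> N"
    using r k by (intro submodule_finsum[OF N G(1)]) (auto intro!: submoduleE(4)[OF N])
  have "finsum M (\<lambda>g. r g \<odot>\<^bsub>M\<^esub> (k g \<oplus>\<^bsub>M\<^esub> g \<odot>\<^bsub>M\<^esub> s)) G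
      = finsum M (\<lambda>g. r g \<odot>\<^bsub>M\<^esub> k g \<oplus>\<^bsub>M\<^esub> (r g \<otimes> g) \<odot>\<^bsub>M\<^esub> s) G"
    using r G kM s by (intro finsum_cong') (auto simp: smult_r_distr smult_assoc1 subset_iff Pi_iff)
  also have "\<dots> = finsum M (\<lambda>g. r g \<odot>\<^bsub>M\<^esub> k g) G \<oplus>\<^bsub>M\<^esub> finsum M (\<lambda>g. (r g \<otimes> g) \<odot>\<^bsub>M\<^esub> s) G"
    using r G kM s by (intro finsum_addf) (auto simp: subset_iff Pi_iff)
  also have "finsum M (\<lambda>g. (r g \<otimes> g) \<odot>\<^bsub>M\<^esub> s) G = finsum R (\<lambda>g. r g \<otimes> g) G \<odot>\<^bsub>M\<^esub> s"
    using r G s by (intro finsum_smult_rdistr[symmetric]) (auto simp: subset_iff Pi_iff)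
  finally show "finsum M (\<lambda>g. r g \<odot>\<^bsub>M\<^esub> (k g \<oplus>\<^bsub>M\<^esub> g \<odot>\<^bsub>M\<^esub> s)) G
    = finsum M (\<lambda>g. r g \<odot>\<^bsub>M\<^esub> k g) G \<oplus>\<^bsub>M\<^esub> finsum R (\<lambda>g. r g \<otimes> g) G \<odot>\<^bsub>M\<^esub> s" .
qed

text \<open>The coefficients of \<open>s\<close> in \<open>H\<close> form an ideal; lifts of its finitely many generators,
  together with generators of \<open>H \<inter> N\<close>, span \<open>H\<close>.\<close>

lemma noetherian_submodule_plus_cyclic_span:
  assumes noeth: "noetherian_ring R" and N: "submodule N R M" and s: "s \<in> carrier M"
    and H: "submodule H R M" "H \<subseteq> plus_cyclic R M N s"
    and T0: "finite T0" "T0 \<subseteq> H \<inter> N" "H \<inter> N = span R M T0"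
  shows "\<exists>T. finite T \<and> T \<subseteq> H \<and> H = span R M T"
proof -
  interpret noetherian_ring R by fact
  have HM: "H \<subseteq> carrier M" using submoduleE(1)[OF H(1)] .
  define I where "I = {a \<in> carrier R. \<exists>k\<in>N. k \<oplus>\<^bsub>M\<^esub> a \<odot>\<^bsub>M\<^esub> s \<in> H}"
  obtain G where G: "G \<subseteq> carrier R" "finite G" "I = Idl G"
    using finetely_gen[OF coefficient_ideal[OF H(1) N s]] unfolding I_def by auto
  have "G \<subseteq> I" using G genideal_self by auto
  then have "\<forall>g\<in>G. \<exists>k. k \<in> N \<and> k \<oplus>\<^bsub>M\<^esub> g \<odot>\<^bsub>M\<^esub> s \<in> H" unfolding I_def by blast
  then obtain kf where kf: "\<And>g. g \<in> G \<Longrightarrow> kf g \<in> N \<and> kf g \<oplus>\<^bsub>M\<^esub> g \<odot>\<^bsub>M\<^esub> s \<in> H"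
    by metis
  define T where "T = T0 \<union> (\<lambda>g. kf g \<oplus>\<^bsub>M\<^esub> g \<odot>\<^bsub>M\<^esub> s) ` G"
  have T: "finite T" "T \<subseteq> H" using T0 G kf unfolding T_def by auto
  have TM: "T \<subseteq> carrier M" using T HM by auto
  have subT: "submodule (span R M T) R M" using span_submodule[OF T(1) TM] .
  have TsT: "T \<subseteq> span R M T" using span_superset[OF T(1) TM] .
  have "h \<in> span R M T" if h: "h \<in> H" for h
  proof -
    obtain k a where k: "k \<in> N" and a: "a \<in> carrier R" and hk: "h = k \<oplus>\<^bsub>M\<^esub> a \<odot>\<^bsub>M\<^esub> s"
      using h H(2) unfolding plus_cyclic_def by auto
    have "a \<in> I" unfolding I_def using k a h hk by auto
    then obtain r where r: "r \<in> G \<rightarrow> carrier R" and ar: "a = finsum R (\<lambda>g. r g \<otimes> g) G"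
      using R.genideal_finsum[OF G(2,1)] G(3) by auto
    define h' where "h' = finsum M (\<lambda>g. r g \<odot>\<^bsub>M\<^esub> (kf g \<oplus>\<^bsub>M\<^esub> g \<odot>\<^bsub>M\<^esub> s)) G"
    obtain k' where k': "k' \<in> N" "h' = k' \<oplus>\<^bsub>M\<^esub> a \<odot>\<^bsub>M\<^esub> s"
      using finsum_smult_plus_cyclic[OF N s G(2,1) r] kf unfolding h'_def ar by blast
    have h'T: "h' \<in> span R M T" unfolding h'_def
      by (intro submodule_finsum[OF subT G(2)] Pi_I submoduleE(4)[OF subT])
        (use r TsT in \<open>auto simp: T_def\<close>)
    have h'H: "h' \<in> H" using h'T span_minimal[OF T(1) H(1) T(2)] by auto
    have "h \<ominus>\<^bsub>M\<^esub> h' = k \<ominus>\<^bsub>M\<^esub> k'"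
      unfolding hk k'(2) using k k'(1) submoduleE(1)[OF N] a s by (auto intro: M.add_diff_add_right)
    then have "h \<ominus>\<^bsub>M\<^esub> h' \<in> H \<inter> N"
      using submodule_diff[OF N k k'(1)] submodule_diff[OF H(1) h h'H] by auto
    moreover have "span R M T0 \<subseteq> span R M T"
      using span_minimal[OF T0(1) subT] TsT unfolding T_def by auto
    ultimately have "(h \<ominus>\<^bsub>M\<^esub> h') \<oplus>\<^bsub>M\<^esub> h' \<in> span R M T"
      using T0(3) submoduleE(5)[OF subT] h'T by auto
    moreover have "h \<in> carrier M" "h' \<in> carrier M" using h h'H HM by auto
    ultimately show ?thesis by simp
  qed
  then show ?thesis using T span_minimal[OF T(1) H(1) T(2)] by blast
qed

lemma noetherian_submodule_span:
  assumes noeth: "noetherian_ring R" and S: "finite S" "S \<subseteq> carrier M"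
    and H: "submodule H R M" "H \<subseteq> span R M S"
  obtains T where "finite T" "T \<subseteq> H" "H = span R M T"
proof -
  have "\<exists>T. finite T \<and> T \<subseteq> H \<and> H = span R M T"
    using S H
  proof (induct S arbitrary: H rule: finite_induct)
    case empty
    then have "H = {\<zero>\<^bsub>M\<^esub>}" using submodule_zero by auto
    then show ?case by auto
  next
    case (insert s S)
    have S: "finite S" "S \<subseteq> carrier M" and s: "s \<in> carrier M" using insert by auto
    have N: "submodule (span R M S) R M" using span_submodule[OF S] .
    obtain T0 where "finite T0" "T0 \<subseteq> H \<inter> span R M S" "H \<inter> span R M S = span R M T0"
      using insert(3)[OF S(2) submodule_Int[OF insert(5) N]] by blast
    then show ?case
      using noetherian_submodule_plus_cyclic_span[OF noeth N s insert(5)] insert(6) span_insert[OF S s] by simp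
  qed
  then show ?thesis using that by blast
qed

end

lemma fg_submodule:
  fixes M :: "('a,'b) module"
  assumes M: "module R M" and "noetherian_ring R" "fg_module R M" "submodule H R M"
  shows "fg_module R (M\<lparr>carrier := H\<rparr>)"
proof -
  interpret module R M by fact
  obtain S where S: "finite S" "S \<subseteq> carrier M" "carrier M = span R M S"
    using assms(3) unfolding fg_module_iff_span by blast
  then have "H \<subseteq> span R M S" using submoduleE(1)[OF assms(4)] by simp
  then obtain T where "finite T" "T \<subseteq> H" "H = span R M T"
    using noetherian_submodule_span[OF assms(2) S(1,2) assms(4)] by blast
  then show ?thesis using fg_submodule_iff_span[OF M assms(4)] by blast
qed

lemma (in module) submodule_Union_chain:
  assumes ne: "Ws \<noteq> {}" and sub: "\<And>W. W \<in> Ws \<Longrightarrow> submodule W R M" and ch: "subset.chain UNIV Ws"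
  shows "submodule (\<Union>Ws) R M"
proof (rule submoduleI)
  show "\<Union>Ws \<subseteq> carrier M" using sub submoduleE(1) by blast
  show "\<zero>\<^bsub>M\<^esub> \<in> \<Union>Ws" using ne sub submodule_zero by blast
  show "\<ominus>\<^bsub>M\<^esub> a \<in> \<Union>Ws" if "a \<in> \<Union>Ws" for a using that sub submoduleE(3) by blast
  show "a \<odot>\<^bsub>M\<^esub> x \<in> \<Union>Ws" if "a \<in> carrier R" "x \<in> \<Union>Ws" for a x using that sub submoduleE(4) by blast
  show "a \<oplus>\<^bsub>M\<^esub> b \<in> \<Union>Ws" if ab: "a \<in> \<Union>Ws" "b \<in> \<Union>Ws" for a b
  proof -
    obtain A B where AB: "A \<in> Ws" "B \<in> Ws" "a \<in> A" "b \<in> B" using ab by auto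
    then have "A \<subseteq> B \<or> B \<subseteq> A" using ch unfolding subset.chain_def by blast
    then show ?thesis using AB sub[OF AB(1)] sub[OF AB(2)] submoduleE(5) by blast
  qed
qed

lemma noetherian_exists_maximal_submodule:
  fixes M :: "('a,'b) module"
  assumes M: "module R M" and noeth: "noetherian_ring R" and fg: "fg_module R M"
    and ne: "Ws \<noteq> {}" and sub: "\<And>W. W \<in> Ws \<Longrightarrow> submodule W R M"
  obtains N where "N \<in> Ws" "\<And>W. W \<in> Ws \<Longrightarrow> N \<subseteq> W \<Longrightarrow> W = N"
proof -
  interpret module R M by fact
  obtain S where S: "finite S" "S \<subseteq> carrier M" "carrier M = span R M S"
    using fg unfolding fg_module_iff_span by blast
  have "\<exists>N\<in>Ws. \<forall>W\<in>Ws. N \<subseteq> W \<longrightarrow> W = N"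
  proof (rule Zorn_Lemma2, intro ballI)
    fix \<C> assume C: "\<C> \<in> chains Ws"
    show "\<exists>U\<in>Ws. \<forall>Y\<in>\<C>. Y \<subseteq> U"
    proof (cases "\<C> = {}")
      case False
      have CS: "\<C> \<subseteq> Ws" and ch: "subset.chain UNIV \<C>"
        using C unfolding chains_alt_def subset.chain_def by auto
      have subC: "submodule W R M" if "W \<in> \<C>" for W using sub CS that by auto
      have U: "submodule (\<Union>\<C>) R M" using submodule_Union_chain[OF False subC ch] .
      have "\<Union>\<C> \<subseteq> span R M S" using S(3) submoduleE(1)[OF U] by simp
      then obtain T where T: "finite T" "T \<subseteq> \<Union>\<C>" "\<Union>\<C> = span R M T"
        using noetherian_submodule_span[OF noeth S(1,2) U] by blast
      obtain B where B: "B \<in> \<C>" "T \<subseteq> B"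
        using finite_subset_Union_chain[OF T(1,2) False ch] by blast
      have "\<Union>\<C> = B" using T(3) span_minimal[OF T(1) subC[OF B(1)] B(2)] B(1) by auto
      then show ?thesis using B CS by auto
    qed (use ne in auto)
  qed
  then show ?thesis using that by blast
qed

section \<open>Colon ideals and associated primes\<close>

context module
begin

lemma colon_ideal:
  assumes N: "submodule N R M" and x: "x \<in> carrier M"
  shows "ideal (colon R M N x) R"
proof -
  have l_closed: "y \<otimes> a \<in> colon R M N x" if "a \<in> colon R M N x" "y \<in> carrier R" for a y
    using that x submoduleE(4)[OF N] by (auto simp: colon_def smult_assoc1)
  have r_closed: "a \<otimes> y \<in> colon R M N x" if "a \<in> colon R M N x" "y \<in> carrier R" for a y
    using l_closed[OF that] that R.m_comm[of a y] by (auto simp: colon_def)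
  have "subgroup (colon R M N x) (add_monoid R)"
  proof (rule R.add.subgroupI)
    show "colon R M N x \<noteq> {}" using x submodule_zero[OF N] unfolding colon_def by (auto intro!: exI[of _ \<zero>])
    show "\<ominus> a \<in> colon R M N x" if "a \<in> colon R M N x" for a
      using that x submoduleE(3)[OF N] by (auto simp: colon_def smult_l_minus)
    show "a \<oplus> b \<in> colon R M N x" if "a \<in> colon R M N x" "b \<in> colon R M N x" for a b
      using that x submoduleE(5)[OF N] by (auto simp: colon_def smult_l_distr)
  qed (auto simp: colon_def)
  then show ?thesis by (rule idealI[OF R.ring_axioms _ l_closed r_closed])
qed

lemma colon_smult_iff:
  "x \<in> carrier M \<Longrightarrow> a \<in> carrier R \<Longrightarrow> b \<in> carrier R \<Longrightarrow>
    b \<in> colon R M N (a \<odot>\<^bsub>M\<^esub> x) \<longleftrightarrow> b \<otimes> a \<in> colon R M N x"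
  by (simp add: colon_def smult_assoc1)

lemma colon_smult_subset:
  assumes N: "submodule N R M" and x: "x \<in> carrier M" and a: "a \<in> carrier R"
  shows "colon R M N x \<subseteq> colon R M N (a \<odot>\<^bsub>M\<^esub> x)"
proof
  fix b assume "b \<in> colon R M N x"
  then have "b \<in> carrier R" "b \<odot>\<^bsub>M\<^esub> x \<in> N" unfolding colon_def by auto
  then show "b \<in> colon R M N (a \<odot>\<^bsub>M\<^esub> x)"
    using submoduleE(4)[OF N a] smult_comm[OF _ a x] unfolding colon_def by auto
qed

lemma colon_eq_carrier:
  assumes N: "submodule N R M" and x: "x \<in> N"
  shows "colon R M N x = carrier R"
  using submoduleE(1,4)[OF N] x unfolding colon_def by auto

lemma colon_prime_smult:
  assumes N: "submodule N R M" and z: "z \<in> carrier M" and P: "primeideal (colon R M N z) R"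
    and c: "c \<in> carrier R" "c \<notin> colon R M N z"
  shows "colon R M N (c \<odot>\<^bsub>M\<^esub> z) = colon R M N z"
proof
  show "colon R M N z \<subseteq> colon R M N (c \<odot>\<^bsub>M\<^esub> z)" using colon_smult_subset[OF N z c(1)] .
  show "colon R M N (c \<odot>\<^bsub>M\<^esub> z) \<subseteq> colon R M N z"
    using colon_smult_iff[OF z c(1)] primeideal.I_prime[OF P] c by (auto simp: colon_def)
qed

lemma colon_add_left:
  assumes N: "submodule N R M" and n: "n \<in> N" and z: "z \<in> carrier M"
  shows "colon R M N (n \<oplus>\<^bsub>M\<^esub> z) = colon R M N z"
proof -
  have nM: "n \<in> carrier M" using n submoduleE(1)[OF N] by auto
  have "a \<odot>\<^bsub>M\<^esub> (n \<oplus>\<^bsub>M\<^esub> z) \<in> N \<longleftrightarrow> a \<odot>\<^bsub>M\<^esub> z \<in> N" if a: "a \<in> carrier R" for a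
  proof -
    have an: "a \<odot>\<^bsub>M\<^esub> n \<in> N" using submoduleE(4)[OF N a n] .
    have "a \<odot>\<^bsub>M\<^esub> (n \<oplus>\<^bsub>M\<^esub> z) = a \<odot>\<^bsub>M\<^esub> z \<oplus>\<^bsub>M\<^esub> a \<odot>\<^bsub>M\<^esub> n"
      using a nM z by (simp add: smult_r_distr M.a_comm)
    moreover have "a \<odot>\<^bsub>M\<^esub> z = (a \<odot>\<^bsub>M\<^esub> z \<oplus>\<^bsub>M\<^esub> a \<odot>\<^bsub>M\<^esub> n) \<ominus>\<^bsub>M\<^esub> a \<odot>\<^bsub>M\<^esub> n"
      using a nM z by (intro M.add_diff_cancel[symmetric]) auto
    ultimately show ?thesis using an submoduleE(5)[OF N _ an] submodule_diff[OF N _ an] by metis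
  qed
  then show ?thesis unfolding colon_def by auto
qed

lemma colon_prime_if_maximal:
  assumes N: "submodule N R M" and y: "y \<in> carrier M" "y \<notin> N"
    and maximal: "\<And>b. b \<in> carrier R \<Longrightarrow> b \<odot>\<^bsub>M\<^esub> y \<notin> N \<Longrightarrow> colon R M N (b \<odot>\<^bsub>M\<^esub> y) = colon R M N y"
  shows "primeideal (colon R M N y) R"
proof (rule primeidealI[OF colon_ideal[OF N y(1)] R.is_cring])
  show "carrier R \<noteq> colon R M N y" using y unfolding colon_def by force
next
  fix b c assume b: "b \<in> carrier R" and c: "c \<in> carrier R" and bc: "b \<otimes> c \<in> colon R M N y"
  show "b \<in> colon R M N y \<or> c \<in> colon R M N y"
  proof (cases "b \<in> colon R M N y")
    case False
    then have "b \<odot>\<^bsub>M\<^esub> y \<notin> N" using b unfolding colon_def by auto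
    moreover have "c \<in> colon R M N (b \<odot>\<^bsub>M\<^esub> y)"
      using colon_smult_iff[OF y(1) b c] bc b c R.m_comm by simp
    ultimately show ?thesis using maximal[OF b] by simp
  qed simp
qed

lemma exists_prime_colon:
  assumes noeth: "noetherian_ring R" and N: "submodule N R M" and x: "x \<in> carrier M" "x \<notin> N"
  obtains a where "a \<in> carrier R" "a \<odot>\<^bsub>M\<^esub> x \<notin> N" "colon R M N x \<subseteq> colon R M N (a \<odot>\<^bsub>M\<^esub> x)"
    "primeideal (colon R M N (a \<odot>\<^bsub>M\<^esub> x)) R"
proof -
  interpret noetherian_ring R by fact
  define Is where "Is = {colon R M N (a \<odot>\<^bsub>M\<^esub> x) | a. a \<in> carrier R \<and> a \<odot>\<^bsub>M\<^esub> x \<notin> N}"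
  have "\<one> \<odot>\<^bsub>M\<^esub> x \<notin> N" using x by simp
  then have "Is \<noteq> {}" unfolding Is_def by blast
  moreover have "ideal I R" if "I \<in> Is" for I using that colon_ideal[OF N] x unfolding Is_def by auto
  ultimately obtain J where J: "J \<in> Is" "\<And>I. I \<in> Is \<Longrightarrow> J \<subseteq> I \<Longrightarrow> I = J"
    using exists_maximal_ideal_in by metis
  then obtain a where a: "a \<in> carrier R" "a \<odot>\<^bsub>M\<^esub> x \<notin> N" and Ja: "J = colon R M N (a \<odot>\<^bsub>M\<^esub> x)"
    unfolding Is_def by auto
  have y: "a \<odot>\<^bsub>M\<^esub> x \<in> carrier M" using a x by simp
  have "colon R M N (b \<odot>\<^bsub>M\<^esub> (a \<odot>\<^bsub>M\<^esub> x)) = J"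
    if b: "b \<in> carrier R" "b \<odot>\<^bsub>M\<^esub> (a \<odot>\<^bsub>M\<^esub> x) \<notin> N" for b
  proof -
    have "b \<odot>\<^bsub>M\<^esub> (a \<odot>\<^bsub>M\<^esub> x) = (b \<otimes> a) \<odot>\<^bsub>M\<^esub> x" using a b x by (simp add: smult_assoc1)
    then have "colon R M N (b \<odot>\<^bsub>M\<^esub> (a \<odot>\<^bsub>M\<^esub> x)) \<in> Is" unfolding Is_def using a b by auto
    then show ?thesis using J(2) colon_smult_subset[OF N y b(1)] Ja by simp
  qed
  then have "primeideal J R" unfolding Ja using colon_prime_if_maximal[OF N y a(2)] Ja by simp
  then show ?thesis using that a colon_smult_subset[OF N x(1) a(1)] Ja by simp
qed

end

lemma colon_carrier_update [simp]: "colon R (M\<lparr>carrier := H\<rparr>) N x = colon R M N x"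
  by (simp add: colon_def)

lemma Ass_colon: "Ass R M = {P. primeideal P R \<and> (\<exists>x\<in>carrier M. P = colon R M {\<zero>\<^bsub>M\<^esub>} x)}"
  by (simp add: Ass_def colon_def)

lemma Ass_carrier_update:
  "Ass R (M\<lparr>carrier := H\<rparr>) = {P. primeideal P R \<and> (\<exists>x\<in>H. P = colon R M {\<zero>\<^bsub>M\<^esub>} x)}"
  by (simp add: Ass_def colon_def)

lemma mod_hom_zero:
  assumes M: "module R M" and N: "module R N" and f: "mod_hom R M N f"
  shows "f \<zero>\<^bsub>M\<^esub> = \<zero>\<^bsub>N\<^esub>"
proof -
  interpret M: module R M by fact
  interpret N: module R N by fact
  have fz: "f \<zero>\<^bsub>M\<^esub> \<in> carrier N" using f unfolding mod_hom_def by auto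
  have "f \<zero>\<^bsub>M\<^esub> = f (\<zero>\<^bsub>R\<^esub> \<odot>\<^bsub>M\<^esub> \<zero>\<^bsub>M\<^esub>)" by simp
  also have "\<dots> = \<zero>\<^bsub>R\<^esub> \<odot>\<^bsub>N\<^esub> f \<zero>\<^bsub>M\<^esub>"
    using f M.zero_closed unfolding mod_hom_def by (meson M.R.zero_closed)
  also have "\<dots> = \<zero>\<^bsub>N\<^esub>" using fz by simp
  finally show ?thesis .
qed

lemma mod_hom_neg:
  assumes M: "module R M" and N: "module R N" and f: "mod_hom R M N f" and x: "x \<in> carrier M"
  shows "f (\<ominus>\<^bsub>M\<^esub> x) = \<ominus>\<^bsub>N\<^esub> f x"
proof -
  interpret M: module R M by fact
  interpret N: module R N by fact
  have "f ((\<ominus>\<^bsub>R\<^esub> \<one>\<^bsub>R\<^esub>) \<odot>\<^bsub>M\<^esub> x) = (\<ominus>\<^bsub>R\<^esub> \<one>\<^bsub>R\<^esub>) \<odot>\<^bsub>N\<^esub> f x" "f x \<in> carrier N"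
    using f x unfolding mod_hom_def by auto
  then show ?thesis using x by (simp add: M.smult_l_minus N.smult_l_minus)
qed

lemma mod_iso_sym:
  assumes M: "module R M" and N: "module R N" and f: "mod_iso R M N f"
  shows "mod_iso R N M (inv_into (carrier M) f)"
proof -
  interpret M: module R M by fact
  define g where "g = inv_into (carrier M) f"
  have bij: "bij_betw f (carrier M) (carrier N)" and h: "mod_hom R M N f"
    using f unfolding mod_iso_def by auto
  have bg: "bij_betw g (carrier N) (carrier M)" unfolding g_def using bij_betw_inv_into[OF bij] .
  have gc: "g u \<in> carrier M" if "u \<in> carrier N" for u using bg that bij_betwE by blast
  have fg: "f (g u) = u" if "u \<in> carrier N" for u
    unfolding g_def using bij that by (simp add: bij_betw_def f_inv_into_f)
  have gf: "g (f x) = x" if "x \<in> carrier M" for x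
    unfolding g_def using bij that by (simp add: bij_betw_def inv_into_f_f)
  have "g (u \<oplus>\<^bsub>N\<^esub> v) = g u \<oplus>\<^bsub>M\<^esub> g v" if "u \<in> carrier N" "v \<in> carrier N" for u v
    using gf[of "g u \<oplus>\<^bsub>M\<^esub> g v"] h gc fg that unfolding mod_hom_def by auto
  moreover have "g (a \<odot>\<^bsub>N\<^esub> u) = a \<odot>\<^bsub>M\<^esub> g u" if "a \<in> carrier R" "u \<in> carrier N" for a u
    using gf[of "a \<odot>\<^bsub>M\<^esub> g u"] h gc fg that unfolding mod_hom_def by auto
  ultimately show ?thesis
    using bg gc unfolding mod_iso_def mod_hom_def g_def by auto
qed

lemma colon_inj_hom:
  assumes L: "module R L" and M: "module R M" and f: "mod_hom R L M f" "inj_on f (carrier L)"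
    and x: "x \<in> carrier L"
  shows "colon R M {\<zero>\<^bsub>M\<^esub>} (f x) = colon R L {\<zero>\<^bsub>L\<^esub>} x"
proof -
  interpret L: module R L by fact
  have "f (a \<odot>\<^bsub>L\<^esub> x) = f \<zero>\<^bsub>L\<^esub> \<longleftrightarrow> a \<odot>\<^bsub>L\<^esub> x = \<zero>\<^bsub>L\<^esub>" if "a \<in> carrier R" for a
    using inj_onD[OF f(2)] that x by auto
  moreover have "f (a \<odot>\<^bsub>L\<^esub> x) = a \<odot>\<^bsub>M\<^esub> f x" if "a \<in> carrier R" for a
    using f(1) that x unfolding mod_hom_def by auto
  ultimately show ?thesis using mod_hom_zero[OF L M f(1)] unfolding colon_def by auto
qed

lemma Ass_exists_superset:
  assumes M: "module R M" and noeth: "noetherian_ring R" and z: "z \<in> carrier M" "z \<noteq> \<zero>\<^bsub>M\<^esub>"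
  obtains P where "P \<in> Ass R M" "colon R M {\<zero>\<^bsub>M\<^esub>} z \<subseteq> P"
proof -
  interpret module R M by fact
  have "z \<notin> {\<zero>\<^bsub>M\<^esub>}" using z(2) by simp
  then obtain a where "a \<in> carrier R" "a \<odot>\<^bsub>M\<^esub> z \<notin> {\<zero>\<^bsub>M\<^esub>}"
    "colon R M {\<zero>\<^bsub>M\<^esub>} z \<subseteq> colon R M {\<zero>\<^bsub>M\<^esub>} (a \<odot>\<^bsub>M\<^esub> z)"
    "primeideal (colon R M {\<zero>\<^bsub>M\<^esub>} (a \<odot>\<^bsub>M\<^esub> z)) R"
    by (rule exists_prime_colon[OF noeth zero_submodule z(1)])
  then show ?thesis using that z(1) unfolding Ass_colon by blast
qed

lemma Ass_empty_imp_trivial: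
  assumes "module R M" "noetherian_ring R" "Ass R M = {}"
  shows "carrier M = {\<zero>\<^bsub>M\<^esub>}"
proof -
  interpret module R M by fact
  show ?thesis using Ass_exists_superset[OF assms(1,2)] assms(3) by blast
qed

lemma not_prime_colon_mem:
  assumes M: "module R M" and N: "submodule N R M" and x: "x \<in> N"
  shows "\<not> primeideal (colon R M N x) R"
  using module.colon_eq_carrier[OF M N x] primeideal.I_notcarr by metis

lemma Ass_submodule_subset:
  assumes "module R M" "submodule H R M"
  shows "Ass R (M\<lparr>carrier := H\<rparr>) \<subseteq> Ass R M"
  using module.submoduleE(1)[OF assms] by (auto simp: Ass_colon)

lemma Ass_zero_submodule:
  assumes "module R M"
  shows "Ass R (M\<lparr>carrier := {\<zero>\<^bsub>M\<^esub>}\<rparr>) = {}"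
  using not_prime_colon_mem[OF assms module.zero_submodule[OF assms]] unfolding Ass_carrier_update by auto

lemma Ass_submodule_split:
  assumes M: "module R M" and N: "submodule N R M" and H: "submodule H R M" and NH: "N \<subseteq> H"
    and P: "P \<in> Ass R (M\<lparr>carrier := H\<rparr>)"
  shows "P \<in> Ass R (M\<lparr>carrier := N\<rparr>) \<or> (\<exists>z\<in>H. P = colon R M N z)"
proof -
  interpret module R M by fact
  obtain z where z: "z \<in> H" "P = colon R M {\<zero>\<^bsub>M\<^esub>} z" and Pp: "primeideal P R"
    using P unfolding Ass_carrier_update by auto
  have zM: "z \<in> carrier M" using z submoduleE(1)[OF H] by auto
  show ?thesis
  proof (cases "\<exists>c\<in>carrier R. c \<notin> P \<and> c \<odot>\<^bsub>M\<^esub> z \<in> N")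
    case True
    then obtain c where c: "c \<in> carrier R" "c \<notin> P" "c \<odot>\<^bsub>M\<^esub> z \<in> N" by auto
    have "colon R M {\<zero>\<^bsub>M\<^esub>} (c \<odot>\<^bsub>M\<^esub> z) = P"
      using colon_prime_smult[OF zero_submodule zM _ c(1)] z Pp c by auto
    then show ?thesis unfolding Ass_carrier_update using Pp c(3) by auto
  next
    case False
    then have "colon R M N z = P"
      using z submodule_zero[OF N] unfolding colon_def by auto
    then show ?thesis using z by auto
  qed
qed

lemma Ass_plus_cyclic:
  assumes M: "module R M" and N: "submodule N R M" and y: "y \<in> carrier M"
    and q: "primeideal (colon R M N y) R"
  shows "Ass R (M\<lparr>carrier := plus_cyclic R M N y\<rparr>) \<subseteq> Ass R (M\<lparr>carrier := N\<rparr>) \<union> {colon R M N y}"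
proof
  interpret module R M by fact
  fix P assume P: "P \<in> Ass R (M\<lparr>carrier := plus_cyclic R M N y\<rparr>)"
  then have Pp: "primeideal P R" unfolding Ass_carrier_update by auto
  have "P = colon R M N y" if zy: "z \<in> plus_cyclic R M N y" and Pz: "P = colon R M N z" for z
  proof -
    obtain n b where n: "n \<in> N" and b: "b \<in> carrier R" and z: "z = n \<oplus>\<^bsub>M\<^esub> b \<odot>\<^bsub>M\<^esub> y"
      using zy unfolding plus_cyclic_def by auto
    have P2: "P = colon R M N (b \<odot>\<^bsub>M\<^esub> y)" using Pz colon_add_left[OF N n] b y z by simp
    then have "b \<notin> colon R M N y"
      using not_prime_colon_mem[OF M N] Pp unfolding colon_def by auto
    then show ?thesis using P2 colon_prime_smult[OF N y q b] by simp
  qed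
  then show "P \<in> Ass R (M\<lparr>carrier := N\<rparr>) \<union> {colon R M N y}"
    using Ass_submodule_split[OF M N plus_cyclic_submodule[OF N y] plus_cyclic_superset(1)[OF N y] P] by blast
qed

lemma finite_Ass:
  assumes M: "module R M" and noeth: "noetherian_ring R" and fg: "fg_module R M"
  shows "finite (Ass R M)"
proof -
  interpret module R M by fact
  define Ns where "Ns = {N. submodule N R M \<and> finite (Ass R (M\<lparr>carrier := N\<rparr>))}"
  have "{\<zero>\<^bsub>M\<^esub>} \<in> Ns" unfolding Ns_def using zero_submodule Ass_zero_submodule[OF M] by auto
  then obtain N where N: "N \<in> Ns" "\<And>W. W \<in> Ns \<Longrightarrow> N \<subseteq> W \<Longrightarrow> W = N"
    using noetherian_exists_maximal_submodule[OF M noeth fg, of Ns] unfolding Ns_def by blast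
  have subN: "submodule N R M" and fin: "finite (Ass R (M\<lparr>carrier := N\<rparr>))" using N(1) unfolding Ns_def by auto
  have "N = carrier M"
  proof (rule ccontr)
    assume "N \<noteq> carrier M"
    then obtain x where x: "x \<in> carrier M" "x \<notin> N" using submoduleE(1)[OF subN] by auto
    then obtain a where a: "a \<in> carrier R" "a \<odot>\<^bsub>M\<^esub> x \<notin> N" "primeideal (colon R M N (a \<odot>\<^bsub>M\<^esub> x)) R"
      using exists_prime_colon[OF noeth subN] by metis
    let ?y = "a \<odot>\<^bsub>M\<^esub> x"
    have y: "?y \<in> carrier M" using a x by simp
    have "finite (Ass R (M\<lparr>carrier := plus_cyclic R M N ?y\<rparr>))"
      using Ass_plus_cyclic[OF M subN y a(3)] fin finite_subset by blast
    then have "plus_cyclic R M N ?y \<in> Ns" unfolding Ns_def using plus_cyclic_submodule[OF subN y] by auto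
    then show False using N(2) plus_cyclic_superset[OF subN y] a(2) by blast
  qed
  then show ?thesis using fin by simp
qed

lemma Ass_short_exact:
  assumes L: "module R L" and M: "module R M" and N: "module R N" and se: "short_exact R L M N f g"
  shows "Ass R M \<subseteq> Ass R L \<union> Ass R N"
proof
  interpret M: module R M by fact
  have f: "mod_hom R L M f" "inj_on f (carrier L)" and g: "mod_hom R M N g"
    and ker: "f ` carrier L = {x \<in> carrier M. g x = \<zero>\<^bsub>N\<^esub>}"
    using se unfolding short_exact_def by auto
  fix P assume "P \<in> Ass R M"
  then obtain z where z: "z \<in> carrier M" "P = colon R M {\<zero>\<^bsub>M\<^esub>} z" and Pp: "primeideal P R"
    unfolding Ass_colon by auto
  have gsmult: "g (a \<odot>\<^bsub>M\<^esub> z) = a \<odot>\<^bsub>N\<^esub> g z" if "a \<in> carrier R" for a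
    using g that z(1) unfolding mod_hom_def by blast
  show "P \<in> Ass R L \<union> Ass R N"
  proof (cases "\<exists>c\<in>carrier R. c \<notin> P \<and> g (c \<odot>\<^bsub>M\<^esub> z) = \<zero>\<^bsub>N\<^esub>")
    case True
    then obtain c where c: "c \<in> carrier R" "c \<notin> P" "g (c \<odot>\<^bsub>M\<^esub> z) = \<zero>\<^bsub>N\<^esub>" by auto
    then obtain l where l: "l \<in> carrier L" "f l = c \<odot>\<^bsub>M\<^esub> z" using ker z by (metis (mono_tags, lifting) M.smult_closed imageE mem_Collect_eq)
    have "colon R M {\<zero>\<^bsub>M\<^esub>} (c \<odot>\<^bsub>M\<^esub> z) = P"
      using M.colon_prime_smult[OF M.zero_submodule z(1) _ c(1)] z Pp c by auto
    then have "P \<in> Ass R L" unfolding Ass_colon using Pp l colon_inj_hom[OF L M f l(1)] by auto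
    then show ?thesis by simp
  next
    case False
    have "colon R N {\<zero>\<^bsub>N\<^esub>} (g z) = P"
    proof
      show "P \<subseteq> colon R N {\<zero>\<^bsub>N\<^esub>} (g z)"
        using z gsmult mod_hom_zero[OF M N g] unfolding colon_def by force
      show "colon R N {\<zero>\<^bsub>N\<^esub>} (g z) \<subseteq> P"
        using False gsmult unfolding colon_def by force
    qed
    moreover have "g z \<in> carrier N" using g z unfolding mod_hom_def by auto
    ultimately have "P \<in> Ass R N" unfolding Ass_colon using Pp by auto
    then show ?thesis by simp
  qed
qed

lemma Ass_mod_iso:
  assumes M: "module R M" and N: "module R N" and f: "mod_iso R M N f"
  shows "Ass R N = Ass R M"
proof -
  have h: "mod_hom R M N f" "inj_on f (carrier M)" and im: "f ` carrier M = carrier N"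
    using f unfolding mod_iso_def bij_betw_def by auto
  have "(\<exists>u\<in>carrier N. P = colon R N {\<zero>\<^bsub>N\<^esub>} u) \<longleftrightarrow> (\<exists>x\<in>carrier M. P = colon R M {\<zero>\<^bsub>M\<^esub>} x)"
    for P
  proof
    assume "\<exists>u\<in>carrier N. P = colon R N {\<zero>\<^bsub>N\<^esub>} u"
    then obtain u where u: "u \<in> carrier N" "P = colon R N {\<zero>\<^bsub>N\<^esub>} u" by blast
    moreover obtain x where "x \<in> carrier M" "u = f x" using u(1) im by auto
    ultimately show "\<exists>x\<in>carrier M. P = colon R M {\<zero>\<^bsub>M\<^esub>} x" using colon_inj_hom[OF M N h] by auto
  next
    assume "\<exists>x\<in>carrier M. P = colon R M {\<zero>\<^bsub>M\<^esub>} x"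
    then obtain x where "x \<in> carrier M" "P = colon R M {\<zero>\<^bsub>M\<^esub>} x" by auto
    then show "\<exists>u\<in>carrier N. P = colon R N {\<zero>\<^bsub>N\<^esub>} u" using colon_inj_hom[OF M N h] im by force
  qed
  then show ?thesis unfolding Ass_colon by simp
qed

lemma fg_module_hom_image:
  assumes M: "module R M" and N: "module R N" and f: "mod_hom R M N f" and s: "f ` carrier M = carrier N"
    and fg: "fg_module R M"
  shows "fg_module R N"
proof -
  interpret M: module R M by fact
  interpret N: module R N by fact
  obtain S where S: "finite S" "S \<subseteq> carrier M" "carrier M = span R M S"
    using fg unfolding fg_module_iff_span by auto
  have fS: "finite (f ` S)" "f ` S \<subseteq> carrier N" using S s by auto
  note spN = N.span_submodule[OF fS]
  define Pre where "Pre = {x \<in> carrier M. f x \<in> span R N (f ` S)}"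
  have "submodule Pre R M"
  proof (rule M.submoduleI)
    show "\<zero>\<^bsub>M\<^esub> \<in> Pre" unfolding Pre_def using mod_hom_zero[OF M N f] N.submodule_zero[OF spN] by auto
    show "\<ominus>\<^bsub>M\<^esub> a \<in> Pre" if "a \<in> Pre" for a
      using that mod_hom_neg[OF M N f] N.submoduleE(3)[OF spN] unfolding Pre_def by auto
    show "a \<oplus>\<^bsub>M\<^esub> b \<in> Pre" if "a \<in> Pre" "b \<in> Pre" for a b
      using that f N.submoduleE(5)[OF spN] unfolding Pre_def mod_hom_def by auto
    show "a \<odot>\<^bsub>M\<^esub> x \<in> Pre" if "a \<in> carrier R" "x \<in> Pre" for a x
      using that f N.submoduleE(4)[OF spN] unfolding Pre_def mod_hom_def by auto
  qed (auto simp: Pre_def)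
  moreover have "S \<subseteq> Pre" unfolding Pre_def using S(2) N.span_superset[OF fS] by auto
  ultimately have "carrier M \<subseteq> Pre" using M.span_minimal[OF S(1)] S(3) by auto
  then have "carrier N \<subseteq> span R N (f ` S)" unfolding s[symmetric] Pre_def by auto
  then have "carrier N = span R N (f ` S)" using N.submoduleE(1)[OF spN] by auto
  then show ?thesis unfolding fg_module_iff_span using fS by auto
qed

section \<open>Quotient modules\<close>

text \<open>The module structure of \<open>M\<close> transported along \<open>\<phi>\<close> through arbitrary preimages; it is
  \<open>M/N\<close> when \<open>\<phi>\<close> identifies exactly the cosets of \<open>N\<close> (locale \<open>quotient_map\<close>). The
  multiplicative fields only fill the record.\<close>

definition induced_module :: "('b \<Rightarrow> 'c) \<Rightarrow> ('a,'b) module \<Rightarrow> ('a,'c) module" where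
  "induced_module \<phi> M = \<lparr>carrier = \<phi> ` carrier M,
     monoid.mult = (\<lambda>u v. \<phi> (inv_into (carrier M) \<phi> u \<otimes>\<^bsub>M\<^esub> inv_into (carrier M) \<phi> v)),
     one = \<phi> \<one>\<^bsub>M\<^esub>, ring.zero = \<phi> \<zero>\<^bsub>M\<^esub>,
     ring.add = (\<lambda>u v. \<phi> (inv_into (carrier M) \<phi> u \<oplus>\<^bsub>M\<^esub> inv_into (carrier M) \<phi> v)),
     smult = (\<lambda>a u. \<phi> (a \<odot>\<^bsub>M\<^esub> inv_into (carrier M) \<phi> u))\<rparr>"

lemma induced_module_simps [simp]:
  "carrier (induced_module \<phi> M) = \<phi> ` carrier M"
  "\<zero>\<^bsub>induced_module \<phi> M\<^esub> = \<phi> \<zero>\<^bsub>M\<^esub>"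
  by (simp_all add: induced_module_def)

locale quotient_map = module R M for R :: "('a,'c) ring_scheme" and M :: "('a,'b) module" +
  fixes N :: "'b set" and \<phi> :: "'b \<Rightarrow> 'd"
  assumes N: "submodule N R M"
    and eq_iff: "\<And>x y. x \<in> carrier M \<Longrightarrow> y \<in> carrier M \<Longrightarrow> \<phi> x = \<phi> y \<longleftrightarrow> x \<ominus>\<^bsub>M\<^esub> y \<in> N"
begin

abbreviation (input) rep where "rep u \<equiv> inv_into (carrier M) \<phi> u"

lemma rep_diff: "x \<in> carrier M \<Longrightarrow> rep (\<phi> x) \<in> carrier M \<and> rep (\<phi> x) \<ominus>\<^bsub>M\<^esub> x \<in> N"
  using eq_iff inv_into_into[of "\<phi> x" \<phi> "carrier M"] f_inv_into_f[of "\<phi> x" \<phi> "carrier M"] by auto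

lemma induced_add [simp]:
  assumes x: "x \<in> carrier M" and y: "y \<in> carrier M"
  shows "\<phi> x \<oplus>\<^bsub>induced_module \<phi> M\<^esub> \<phi> y = \<phi> (x \<oplus>\<^bsub>M\<^esub> y)"
proof -
  have p: "rep (\<phi> x) \<in> carrier M" "rep (\<phi> y) \<in> carrier M" using rep_diff x y by auto
  have "(rep (\<phi> x) \<oplus>\<^bsub>M\<^esub> rep (\<phi> y)) \<ominus>\<^bsub>M\<^esub> (x \<oplus>\<^bsub>M\<^esub> y) = (rep (\<phi> x) \<ominus>\<^bsub>M\<^esub> x) \<oplus>\<^bsub>M\<^esub> (rep (\<phi> y) \<ominus>\<^bsub>M\<^esub> y)"
    using p x y by (simp add: M.diff_add_diff)
  then have "(rep (\<phi> x) \<oplus>\<^bsub>M\<^esub> rep (\<phi> y)) \<ominus>\<^bsub>M\<^esub> (x \<oplus>\<^bsub>M\<^esub> y) \<in> N"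
    using rep_diff x y submoduleE(5)[OF N] by simp
  then show ?thesis unfolding induced_module_def using eq_iff p x y by simp
qed

lemma induced_smult [simp]:
  assumes a: "a \<in> carrier R" and x: "x \<in> carrier M"
  shows "a \<odot>\<^bsub>induced_module \<phi> M\<^esub> \<phi> x = \<phi> (a \<odot>\<^bsub>M\<^esub> x)"
proof -
  have p: "rep (\<phi> x) \<in> carrier M" using rep_diff x by auto
  have "a \<odot>\<^bsub>M\<^esub> rep (\<phi> x) \<ominus>\<^bsub>M\<^esub> a \<odot>\<^bsub>M\<^esub> x \<in> N"
    using rep_diff[OF x] submoduleE(4)[OF N a] a p x by (simp add: smult_diff_right[symmetric])
  then show ?thesis unfolding induced_module_def using eq_iff p x a by simp
qed

lemma induced_module: "module R (induced_module \<phi> M)"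
proof -
  let ?Q = "induced_module \<phi> M"
  have "abelian_group ?Q"
  proof (rule abelian_groupI)
    fix u assume "u \<in> carrier ?Q"
    then obtain x where x: "x \<in> carrier M" "u = \<phi> x" by auto
    then have "\<phi> (\<ominus>\<^bsub>M\<^esub> x) \<oplus>\<^bsub>?Q\<^esub> u = \<zero>\<^bsub>?Q\<^esub>" "\<phi> (\<ominus>\<^bsub>M\<^esub> x) \<in> carrier ?Q" by (simp_all add: M.l_neg)
    then show "\<exists>y\<in>carrier ?Q. y \<oplus>\<^bsub>?Q\<^esub> u = \<zero>\<^bsub>?Q\<^esub>" by blast
  qed (auto simp: M.a_ac)
  then show ?thesis
    by (rule moduleI[OF R.is_cring]) (auto simp: smult_l_distr smult_r_distr smult_assoc1)
qed

lemma induced_hom: "mod_hom R M (induced_module \<phi> M) \<phi>"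
  unfolding mod_hom_def by auto

lemma induced_eq_zero_iff: "x \<in> carrier M \<Longrightarrow> \<phi> x = \<zero>\<^bsub>induced_module \<phi> M\<^esub> \<longleftrightarrow> x \<in> N"
  using eq_iff[of x "\<zero>\<^bsub>M\<^esub>"] by simp

lemma Ass_induced_module:
  "Ass R (induced_module \<phi> M) = {P. primeideal P R \<and> (\<exists>x\<in>carrier M. P = colon R M N x)}"
proof -
  have colon_eq: "colon R (induced_module \<phi> M) {\<phi> \<zero>\<^bsub>M\<^esub>} (\<phi> x) = colon R M N x"
    if x: "x \<in> carrier M" for x
  proof -
    have "a \<odot>\<^bsub>induced_module \<phi> M\<^esub> \<phi> x = \<phi> \<zero>\<^bsub>M\<^esub> \<longleftrightarrow> a \<odot>\<^bsub>M\<^esub> x \<in> N" if "a \<in> carrier R" for a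
      using induced_eq_zero_iff[of "a \<odot>\<^bsub>M\<^esub> x"] that x by simp
    then show ?thesis unfolding colon_def by auto
  qed
  show ?thesis unfolding Ass_colon by (auto simp: colon_eq)
qed

end

text \<open>Choosing a representative of each coset keeps \<open>M/N\<close> on the carrier type of \<open>M\<close>.\<close>

definition coset_rep :: "('a,'b) module \<Rightarrow> 'b set \<Rightarrow> 'b \<Rightarrow> 'b" where
  "coset_rep M N x = (SOME y. y \<in> carrier M \<and> y \<ominus>\<^bsub>M\<^esub> x \<in> N)"

definition quot_module :: "('a,'b) module \<Rightarrow> 'b set \<Rightarrow> ('a,'b) module" where
  "quot_module M N = induced_module (coset_rep M N) M"

lemma coset_rep_eq_iff:
  assumes M: "module R M" and N: "submodule N R M" and x: "x \<in> carrier M" and y: "y \<in> carrier M"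
  shows "coset_rep M N x = coset_rep M N y \<longleftrightarrow> x \<ominus>\<^bsub>M\<^esub> y \<in> N"
proof -
  interpret module R M by fact
  have NM: "N \<subseteq> carrier M" using submoduleE(1)[OF N] .
  have trans: "u \<ominus>\<^bsub>M\<^esub> w \<in> N" if "u \<ominus>\<^bsub>M\<^esub> v \<in> N" "v \<ominus>\<^bsub>M\<^esub> w \<in> N"
    and "u \<in> carrier M" "v \<in> carrier M" "w \<in> carrier M" for u v w
    using submoduleE(5)[OF N that(1,2)] that(3-5) by (simp add: M.diff_add_diff_cancel)
  have sym: "v \<ominus>\<^bsub>M\<^esub> u \<in> N" if "u \<ominus>\<^bsub>M\<^esub> v \<in> N" "u \<in> carrier M" "v \<in> carrier M" for u v
    using submoduleE(3)[OF N that(1)] that(2,3) by (simp add: M.minus_diff)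
  have rep: "coset_rep M N z \<in> carrier M \<and> coset_rep M N z \<ominus>\<^bsub>M\<^esub> z \<in> N" if "z \<in> carrier M" for z
    unfolding coset_rep_def
    by (rule someI[where P = "\<lambda>y. y \<in> carrier M \<and> y \<ominus>\<^bsub>M\<^esub> z \<in> N" and x = z]) (use that submodule_zero[OF N] in simp)
  show ?thesis
  proof
    assume "coset_rep M N x = coset_rep M N y"
    then have "x \<ominus>\<^bsub>M\<^esub> coset_rep M N x \<in> N" "coset_rep M N x \<ominus>\<^bsub>M\<^esub> y \<in> N"
      using rep[OF x] rep[OF y] sym x by auto
    then show "x \<ominus>\<^bsub>M\<^esub> y \<in> N" using trans rep[OF x] x y by simp
  next
    assume xy: "x \<ominus>\<^bsub>M\<^esub> y \<in> N"
    have "z \<ominus>\<^bsub>M\<^esub> x \<in> N \<longleftrightarrow> z \<ominus>\<^bsub>M\<^esub> y \<in> N" if "z \<in> carrier M" for z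
      using trans[of z x y] trans[of z y x] sym[OF xy x y] xy that x y by blast
    then show "coset_rep M N x = coset_rep M N y"
      unfolding coset_rep_def by (intro arg_cong[where f = Eps] ext) auto
  qed
qed

lemma quotient_map_coset_rep:
  assumes "module R M" "submodule N R M"
  shows "quotient_map R M N (coset_rep M N)"
  unfolding quotient_map_def quotient_map_axioms_def using assms by (simp add: coset_rep_eq_iff)

lemma
  assumes M: "module R M" and N: "submodule N R M"
  shows quot_module_module: "module R (quot_module M N)"
    and Ass_quot_module: "Ass R (quot_module M N) = {P. primeideal P R \<and> (\<exists>x\<in>carrier M. P = colon R M N x)}"
    and short_exact_quot_module: "short_exact R (M\<lparr>carrier := N\<rparr>) M (quot_module M N) id (coset_rep M N)"
proof -
  interpret quotient_map R M N "coset_rep M N" using quotient_map_coset_rep[OF M N] .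
  show "module R (quot_module M N)" unfolding quot_module_def by (rule induced_module)
  show "Ass R (quot_module M N) = {P. primeideal P R \<and> (\<exists>x\<in>carrier M. P = colon R M N x)}"
    unfolding quot_module_def by (rule Ass_induced_module)
  have NM: "N \<subseteq> carrier M" using submoduleE(1)[OF N] .
  then have "mod_hom R (M\<lparr>carrier := N\<rparr>) M id" unfolding mod_hom_def by auto
  moreover have "id ` N = {x \<in> carrier M. coset_rep M N x = \<zero>\<^bsub>quot_module M N\<^esub>}"
    using NM induced_eq_zero_iff unfolding quot_module_def by auto
  ultimately show "short_exact R (M\<lparr>carrier := N\<rparr>) M (quot_module M N) id (coset_rep M N)"
    unfolding short_exact_def using induced_hom unfolding quot_module_def by simp
qed

lemma fg_quot_module:
  assumes M: "module R M" and N: "submodule N R M" and fg: "fg_module R M"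
  shows "fg_module R (quot_module M N)"
proof -
  interpret quotient_map R M N "coset_rep M N" using quotient_map_coset_rep[OF M N] .
  show ?thesis unfolding quot_module_def
    using fg_module_hom_image[OF M induced_module induced_hom _ fg] by simp
qed

text \<open>\<open>R/I\<close>, realised on \<open>'a list set\<close> so that it is an object of type \<open>'a fgmod\<close>.\<close>

definition residue_module :: "('a,'c) ring_scheme \<Rightarrow> 'a set \<Rightarrow> 'a fgmod" where
  "residue_module R I = induced_module (\<lambda>a. {[coset_rep (selfmod R) I a]}) (selfmod R)"

context cring
begin

lemma quotient_map_residue:
  assumes "ideal I R"
  shows "quotient_map R (selfmod R) I (\<lambda>a. {[coset_rep (selfmod R) I a]})"
  using coset_rep_eq_iff[OF selfmod_module] assms selfmod_module
  unfolding quotient_map_def quotient_map_axioms_def ideal_iff_submodule_selfmod by simp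

lemma
  assumes I: "ideal I R"
  shows residue_module_module: "module R (residue_module R I)"
    and fg_residue_module: "fg_module R (residue_module R I)"
    and Ass_residue_module: "Ass R (residue_module R I) = {P. primeideal P R \<and> (\<exists>x\<in>carrier R. P = {a \<in> carrier R. a \<otimes> x \<in> I})}"
proof -
  interpret quotient_map R "selfmod R" I "\<lambda>a. {[coset_rep (selfmod R) I a]}"
    using quotient_map_residue[OF I] .
  show "module R (residue_module R I)" unfolding residue_module_def by (rule induced_module)
  show "fg_module R (residue_module R I)" unfolding residue_module_def
    using fg_module_hom_image[OF selfmod_module induced_module induced_hom _ selfmod_fg] by simp
  show "Ass R (residue_module R I) = {P. primeideal P R \<and> (\<exists>x\<in>carrier R. P = {a \<in> carrier R. a \<otimes> x \<in> I})}"
    unfolding residue_module_def Ass_induced_module by (simp add: colon_def)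
qed

lemma Ass_residue_module_prime:
  assumes p: "primeideal p R"
  shows "Ass R (residue_module R p) = {p}"
proof -
  interpret primeideal p R by fact
  have not_p: "{a \<in> carrier R. a \<otimes> x \<in> p} = p" if "x \<in> carrier R" "x \<notin> p" for x
    using that I_prime I_r_closed Icarr by blast
  have in_p: "{a \<in> carrier R. a \<otimes> x \<in> p} = carrier R" if "x \<in> p" for x
    using that I_l_closed by blast
  have "\<one> \<notin> p" using I_notcarr one_imp_carrier by blast
  then have "p \<in> Ass R (residue_module R p)"
    unfolding Ass_residue_module[OF is_ideal] using p not_p[OF one_closed] by blast
  moreover have "P = p" if PA: "P \<in> Ass R (residue_module R p)" for P
  proof -
    obtain x where P: "primeideal P R" "x \<in> carrier R" "P = {a \<in> carrier R. a \<otimes> x \<in> p}"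
      using PA unfolding Ass_residue_module[OF is_ideal] by blast
    show ?thesis
    proof (cases "x \<in> p")
      case True
      then show ?thesis using primeideal.I_notcarr[OF P(1)] P(3) in_p by simp
    qed (use P not_p in simp)
  qed
  ultimately show ?thesis by blast
qed

lemma Ass_residue_module_carrier: "Ass R (residue_module R (carrier R)) = {}"
  unfolding Ass_residue_module[OF oneideal] using primeideal.I_notcarr by auto

end

section \<open>Building modules from cyclic pieces\<close>

lemma mod_hom_smult:
  fixes M :: "('a,'b) module"
  assumes M: "module R M" and H: "submodule H R M" and c: "c \<in> carrier R"
  shows "mod_hom R (M\<lparr>carrier := H\<rparr>) (M\<lparr>carrier := (\<lambda>z. c \<odot>\<^bsub>M\<^esub> z) ` H\<rparr>) (\<lambda>z. c \<odot>\<^bsub>M\<^esub> z)"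
proof -
  interpret module R M by fact
  show ?thesis unfolding mod_hom_def
    using submoduleE(1)[OF H] c by (auto simp: smult_r_distr smult_comm subset_iff)
qed

lemma short_exact_smult:
  fixes M :: "('a,'b) module"
  assumes M: "module R M" and H: "submodule H R M" and a: "a \<in> carrier R"
  shows "short_exact R (M\<lparr>carrier := {z \<in> H. a \<odot>\<^bsub>M\<^esub> z = \<zero>\<^bsub>M\<^esub>}\<rparr>) (M\<lparr>carrier := H\<rparr>)
    (M\<lparr>carrier := (\<lambda>z. a \<odot>\<^bsub>M\<^esub> z) ` H\<rparr>) id (\<lambda>z. a \<odot>\<^bsub>M\<^esub> z)"
  using mod_hom_smult[OF assms] unfolding short_exact_def mod_hom_def by auto

lemma mod_iso_smult:
  fixes M :: "('a,'b) module"
  assumes M: "module R M" and H: "submodule H R M" and c: "c \<in> carrier R"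
    and inj: "\<And>z. z \<in> H \<Longrightarrow> c \<odot>\<^bsub>M\<^esub> z = \<zero>\<^bsub>M\<^esub> \<Longrightarrow> z = \<zero>\<^bsub>M\<^esub>"
  shows "mod_iso R (M\<lparr>carrier := H\<rparr>) (M\<lparr>carrier := (\<lambda>z. c \<odot>\<^bsub>M\<^esub> z) ` H\<rparr>) (\<lambda>z. c \<odot>\<^bsub>M\<^esub> z)"
proof -
  interpret module R M by fact
  have "inj_on (\<lambda>z. c \<odot>\<^bsub>M\<^esub> z) H"
  proof (rule inj_onI)
    fix z w assume z: "z \<in> H" and w: "w \<in> H" and eq: "c \<odot>\<^bsub>M\<^esub> z = c \<odot>\<^bsub>M\<^esub> w"
    have zw: "z \<in> carrier M" "w \<in> carrier M" using z w submoduleE(1)[OF H] by auto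
    then have "c \<odot>\<^bsub>M\<^esub> (z \<ominus>\<^bsub>M\<^esub> w) = \<zero>\<^bsub>M\<^esub>" using eq c by (simp add: smult_diff_right)
    then show "z = w" using inj[OF submodule_diff[OF H z w]] zw by (simp add: M.diff_eq_zero_iff)
  qed
  then show ?thesis using mod_hom_smult[OF assms(1-3)] unfolding mod_iso_def bij_betw_def by simp
qed

lemma (in module) plus_cyclic_coefficient:
  assumes "submodule N R M" "y \<in> carrier M" "z \<in> plus_cyclic R M N y"
  shows "\<exists>a\<in>carrier R. z \<ominus>\<^bsub>M\<^esub> a \<odot>\<^bsub>M\<^esub> y \<in> N"
proof -
  obtain n a where "n \<in> N" "a \<in> carrier R" "z = n \<oplus>\<^bsub>M\<^esub> a \<odot>\<^bsub>M\<^esub> y"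
    using assms(3) unfolding plus_cyclic_def by blast
  then show ?thesis using submoduleE(1)[OF assms(1)] assms(2) by (intro bexI[of _ a]) auto
qed

lemma (in module) plus_cyclic_zero:
  assumes "y \<in> carrier M"
  shows "plus_cyclic R M {\<zero>\<^bsub>M\<^esub>} y = {a \<odot>\<^bsub>M\<^esub> y | a. a \<in> carrier R}"
  unfolding plus_cyclic_def using assms by (auto, metis M.l_zero smult_closed)

lemma mod_hom_plus_cyclic_map:
  fixes M :: "('a,'b) module" and M' :: "('a,'c) module"
  assumes M: "module R M" and N: "submodule N R M" and y: "y \<in> carrier M"
    and M': "module R M'" and y': "y' \<in> carrier M'"
    and g: "\<And>z a. z \<in> plus_cyclic R M N y \<Longrightarrow> a \<in> carrier R \<Longrightarrow> z \<ominus>\<^bsub>M\<^esub> a \<odot>\<^bsub>M\<^esub> y \<in> N \<Longrightarrow>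
      g z = a \<odot>\<^bsub>M'\<^esub> y'"
  shows "mod_hom R (M\<lparr>carrier := plus_cyclic R M N y\<rparr>) (M'\<lparr>carrier := plus_cyclic R M' {\<zero>\<^bsub>M'\<^esub>} y'\<rparr>) g"
  unfolding mod_hom_def
proof (intro conjI ballI)
  interpret M: module R M by fact
  interpret M': module R M' by fact
  let ?H = "plus_cyclic R M N y"
  have HM: "?H \<subseteq> carrier M" using M.submoduleE(1)[OF M.plus_cyclic_submodule[OF N y]] .
  note coeff = M.plus_cyclic_coefficient[OF N y]
  show "g \<in> carrier (M\<lparr>carrier := ?H\<rparr>) \<rightarrow> carrier (M'\<lparr>carrier := plus_cyclic R M' {\<zero>\<^bsub>M'\<^esub>} y'\<rparr>)"
    using coeff g M'.plus_cyclic_zero[OF y'] by fastforce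
  fix z assume "z \<in> carrier (M\<lparr>carrier := ?H\<rparr>)"
  then have z: "z \<in> ?H" by simp
  obtain a where a: "a \<in> carrier R" "z \<ominus>\<^bsub>M\<^esub> a \<odot>\<^bsub>M\<^esub> y \<in> N" using coeff[OF z] by blast
  {
    fix w assume "w \<in> carrier (M\<lparr>carrier := ?H\<rparr>)"
    then have w: "w \<in> ?H" by simp
    obtain b where b: "b \<in> carrier R" "w \<ominus>\<^bsub>M\<^esub> b \<odot>\<^bsub>M\<^esub> y \<in> N" using coeff[OF w] by blast
    have "(z \<oplus>\<^bsub>M\<^esub> w) \<ominus>\<^bsub>M\<^esub> (a \<oplus>\<^bsub>R\<^esub> b) \<odot>\<^bsub>M\<^esub> y = (z \<ominus>\<^bsub>M\<^esub> a \<odot>\<^bsub>M\<^esub> y) \<oplus>\<^bsub>M\<^esub> (w \<ominus>\<^bsub>M\<^esub> b \<odot>\<^bsub>M\<^esub> y)"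
      using z w HM y a(1) b(1) by (simp add: M.smult_l_distr M.diff_add_diff subset_iff)
    then have "g (z \<oplus>\<^bsub>M\<^esub> w) = (a \<oplus>\<^bsub>R\<^esub> b) \<odot>\<^bsub>M'\<^esub> y'"
      using g M.submoduleE(5)[OF N a(2) b(2)] M.submoduleE(5)[OF M.plus_cyclic_submodule[OF N y] z w] a b
      by simp
    then show "g (z \<oplus>\<^bsub>M\<lparr>carrier := ?H\<rparr>\<^esub> w) = g z \<oplus>\<^bsub>M'\<lparr>carrier := plus_cyclic R M' {\<zero>\<^bsub>M'\<^esub>} y'\<rparr>\<^esub> g w"
      using g[OF z a] g[OF w b] y' a(1) b(1) by (simp add: M'.smult_l_distr)
  }
  fix r assume r: "r \<in> carrier R"
  have "r \<odot>\<^bsub>M\<^esub> z \<ominus>\<^bsub>M\<^esub> (r \<otimes>\<^bsub>R\<^esub> a) \<odot>\<^bsub>M\<^esub> y = r \<odot>\<^bsub>M\<^esub> (z \<ominus>\<^bsub>M\<^esub> a \<odot>\<^bsub>M\<^esub> y)"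
    using z HM y r a(1) by (simp add: M.smult_diff_right M.smult_assoc1 subset_iff)
  then have "g (r \<odot>\<^bsub>M\<^esub> z) = (r \<otimes>\<^bsub>R\<^esub> a) \<odot>\<^bsub>M'\<^esub> y'"
    using g M.submoduleE(4)[OF N r a(2)] M.submoduleE(4)[OF M.plus_cyclic_submodule[OF N y] r z] r a(1)
    by simp
  then show "g (r \<odot>\<^bsub>M\<lparr>carrier := ?H\<rparr>\<^esub> z) = r \<odot>\<^bsub>M'\<lparr>carrier := plus_cyclic R M' {\<zero>\<^bsub>M'\<^esub>} y'\<rparr>\<^esub> g z"
    using g[OF z a] r y' a(1) by (simp add: M'.smult_assoc1)
qed

lemma short_exact_plus_cyclic_map:
  fixes M :: "('a,'b) module" and M' :: "('a,'c) module"
  assumes M: "module R M" and N: "submodule N R M" and y: "y \<in> carrier M"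
    and M': "module R M'" and y': "y' \<in> carrier M'"
    and ann: "colon R M N y = colon R M' {\<zero>\<^bsub>M'\<^esub>} y'"
    and g: "\<And>z a. z \<in> plus_cyclic R M N y \<Longrightarrow> a \<in> carrier R \<Longrightarrow> z \<ominus>\<^bsub>M\<^esub> a \<odot>\<^bsub>M\<^esub> y \<in> N \<Longrightarrow>
      g z = a \<odot>\<^bsub>M'\<^esub> y'"
  shows "short_exact R (M\<lparr>carrier := N\<rparr>) (M\<lparr>carrier := plus_cyclic R M N y\<rparr>)
    (M'\<lparr>carrier := plus_cyclic R M' {\<zero>\<^bsub>M'\<^esub>} y'\<rparr>) id g"
proof -
  interpret M: module R M by fact
  interpret M': module R M' by fact
  let ?H = "plus_cyclic R M N y"
  have NM: "N \<subseteq> carrier M" using M.submoduleE(1)[OF N] .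
  have H: "submodule ?H R M" "N \<subseteq> ?H" "y \<in> ?H"
    using M.plus_cyclic_submodule[OF N y] M.plus_cyclic_superset[OF N y] by auto
  note coeff = M.plus_cyclic_coefficient[OF N y]
  have "g ` ?H = plus_cyclic R M' {\<zero>\<^bsub>M'\<^esub>} y'"
  proof
    show "g ` ?H \<subseteq> plus_cyclic R M' {\<zero>\<^bsub>M'\<^esub>} y'"
      using coeff g M'.plus_cyclic_zero[OF y'] by fastforce
    have "a \<odot>\<^bsub>M'\<^esub> y' \<in> g ` ?H" if "a \<in> carrier R" for a
      using g[of "a \<odot>\<^bsub>M\<^esub> y" a] M.submoduleE(4)[OF H(1) that H(3)] M.submodule_zero[OF N] that y
      by (metis M.diff_self M.smult_closed image_eqI)
    then show "plus_cyclic R M' {\<zero>\<^bsub>M'\<^esub>} y' \<subseteq> g ` ?H" using M'.plus_cyclic_zero[OF y'] by auto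
  qed
  moreover have "z \<in> N \<longleftrightarrow> g z = \<zero>\<^bsub>M'\<^esub>" if z: "z \<in> ?H" for z
  proof -
    obtain a where a: "a \<in> carrier R" "z \<ominus>\<^bsub>M\<^esub> a \<odot>\<^bsub>M\<^esub> y \<in> N" using coeff[OF z] by blast
    have zM: "z \<in> carrier M" and ay: "a \<odot>\<^bsub>M\<^esub> y \<in> carrier M"
      using z M.submoduleE(1)[OF H(1)] a(1) y by auto
    have "z \<in> N \<longleftrightarrow> a \<odot>\<^bsub>M\<^esub> y \<in> N"
    proof
      assume "z \<in> N"
      then have "\<ominus>\<^bsub>M\<^esub> (z \<ominus>\<^bsub>M\<^esub> a \<odot>\<^bsub>M\<^esub> y) \<oplus>\<^bsub>M\<^esub> z \<in> N"
        using M.submoduleE(3,5)[OF N] a(2) by blast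
      then show "a \<odot>\<^bsub>M\<^esub> y \<in> N" using zM ay by (simp add: M.minus_diff)
    next
      assume "a \<odot>\<^bsub>M\<^esub> y \<in> N"
      then have "(z \<ominus>\<^bsub>M\<^esub> a \<odot>\<^bsub>M\<^esub> y) \<oplus>\<^bsub>M\<^esub> a \<odot>\<^bsub>M\<^esub> y \<in> N" using M.submoduleE(5)[OF N a(2)] by blast
      then show "z \<in> N" using zM ay by simp
    qed
    also have "\<dots> \<longleftrightarrow> a \<in> colon R M' {\<zero>\<^bsub>M'\<^esub>} y'" using ann a(1) unfolding colon_def by blast
    also have "\<dots> \<longleftrightarrow> g z = \<zero>\<^bsub>M'\<^esub>" using a(1) g[OF z a] unfolding colon_def by simp
    finally show ?thesis .
  qed
  then have "id ` N = {z \<in> carrier (M\<lparr>carrier := ?H\<rparr>). g z = \<zero>\<^bsub>M'\<lparr>carrier := plus_cyclic R M' {\<zero>\<^bsub>M'\<^esub>} y'\<rparr>\<^esub>}"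
    using H(2) by auto
  moreover have "mod_hom R (M\<lparr>carrier := N\<rparr>) (M\<lparr>carrier := ?H\<rparr>) id"
    using H(2) NM unfolding mod_hom_def by auto
  ultimately show ?thesis
    unfolding short_exact_def using mod_hom_plus_cyclic_map[OF M N y M' y' g] by simp
qed

text \<open>The map sends \<open>n + a y\<close> to \<open>a y'\<close>; it is well defined because \<open>(N : y) = ann y'\<close>.\<close>

lemma short_exact_plus_cyclic:
  fixes M :: "('a,'b) module" and M' :: "('a,'c) module"
  assumes M: "module R M" and N: "submodule N R M" and y: "y \<in> carrier M"
    and M': "module R M'" and y': "y' \<in> carrier M'"
    and ann: "colon R M N y = colon R M' {\<zero>\<^bsub>M'\<^esub>} y'"
  shows "\<exists>g. short_exact R (M\<lparr>carrier := N\<rparr>) (M\<lparr>carrier := plus_cyclic R M N y\<rparr>)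
           (M'\<lparr>carrier := plus_cyclic R M' {\<zero>\<^bsub>M'\<^esub>} y'\<rparr>) id g"
proof -
  interpret M: module R M by fact
  interpret M': module R M' by fact
  define g where "g z = (SOME a. a \<in> carrier R \<and> z \<ominus>\<^bsub>M\<^esub> a \<odot>\<^bsub>M\<^esub> y \<in> N) \<odot>\<^bsub>M'\<^esub> y'" for z
  have "g z = a \<odot>\<^bsub>M'\<^esub> y'"
    if z: "z \<in> plus_cyclic R M N y" and a: "a \<in> carrier R" "z \<ominus>\<^bsub>M\<^esub> a \<odot>\<^bsub>M\<^esub> y \<in> N" for z a
  proof -
    obtain b where b: "b \<in> carrier R" "z \<ominus>\<^bsub>M\<^esub> b \<odot>\<^bsub>M\<^esub> y \<in> N" and gb: "g z = b \<odot>\<^bsub>M'\<^esub> y'"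
      using someI_ex[of "\<lambda>a. a \<in> carrier R \<and> z \<ominus>\<^bsub>M\<^esub> a \<odot>\<^bsub>M\<^esub> y \<in> N"] M.plus_cyclic_coefficient[OF N y z]
      unfolding g_def by blast
    have zM: "z \<in> carrier M" using z M.submoduleE(1)[OF M.plus_cyclic_submodule[OF N y]] by auto
    have "(a \<ominus>\<^bsub>R\<^esub> b) \<odot>\<^bsub>M\<^esub> y = (z \<ominus>\<^bsub>M\<^esub> b \<odot>\<^bsub>M\<^esub> y) \<ominus>\<^bsub>M\<^esub> (z \<ominus>\<^bsub>M\<^esub> a \<odot>\<^bsub>M\<^esub> y)"
      using zM a b y by (simp add: M.smult_diff_left M.diff_diff_cancel_left)
    then have "(a \<ominus>\<^bsub>R\<^esub> b) \<odot>\<^bsub>M\<^esub> y \<in> N" using M.submodule_diff[OF N b(2) a(2)] by simp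
    then have "a \<ominus>\<^bsub>R\<^esub> b \<in> colon R M' {\<zero>\<^bsub>M'\<^esub>} y'" using a b ann unfolding colon_def by blast
    then have "a \<odot>\<^bsub>M'\<^esub> y' \<ominus>\<^bsub>M'\<^esub> b \<odot>\<^bsub>M'\<^esub> y' = \<zero>\<^bsub>M'\<^esub>"
      using a b y' unfolding colon_def by (simp add: M'.smult_diff_left)
    then show ?thesis using gb a b y' M'.diff_eq_zero_iff by simp
  qed
  then show ?thesis using short_exact_plus_cyclic_map[OF M N y M' y' ann] by blast
qed

section \<open>Coprimary modules\<close>

lemma (in primeideal) nat_pow_mem_imp_mem:
  assumes a: "a \<in> carrier R" and an: "a [^] (n::nat) \<in> I"
  shows "a \<in> I"
  using an
proof (induction n)
  case 0
  then show ?case using one_imp_carrier I_notcarr by simp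
next
  case (Suc n)
  then show ?case using I_prime[of "a [^] n" a] a by auto
qed

text \<open>The annihilators of \<open>a\<^sup>i z\<close> increase and become stationary at some \<open>k\<close>; if \<open>a\<^sup>k z \<noteq> 0\<close>, a
  multiple of it has an associated prime as annihilator, which is \<open>p \<ni> a\<close>, against stationarity.\<close>

lemma smult_pow_eq_zero_if_Ass_subset:
  fixes M :: "('a,'b) module"
  assumes M: "module R M" and noeth: "noetherian_ring R" and AM: "Ass R M \<subseteq> {p}"
    and a: "a \<in> p" "a \<in> carrier R" and z: "z \<in> carrier M"
  shows "\<exists>e::nat. (a [^]\<^bsub>R\<^esub> e) \<odot>\<^bsub>M\<^esub> z = \<zero>\<^bsub>M\<^esub>"
proof -
  interpret module R M by fact
  interpret noetherian_ring R by fact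
  define I where "I i = colon R M {\<zero>\<^bsub>M\<^esub>} ((a [^]\<^bsub>R\<^esub> (i::nat)) \<odot>\<^bsub>M\<^esub> z)" for i
  have step: "(a [^]\<^bsub>R\<^esub> Suc i) \<odot>\<^bsub>M\<^esub> z = a \<odot>\<^bsub>M\<^esub> ((a [^]\<^bsub>R\<^esub> i) \<odot>\<^bsub>M\<^esub> z)" for i
    using a z by (simp add: smult_assoc1[symmetric] R.m_comm)
  have mono: "I i \<subseteq> I (Suc i)" for i
    unfolding I_def step using colon_smult_subset[OF zero_submodule _ a(2)] a z by simp
  have "ideal J R" if "J \<in> range I" for J using that colon_ideal[OF zero_submodule] a z unfolding I_def by auto
  then obtain J where J: "J \<in> range I" "\<And>J'. J' \<in> range I \<Longrightarrow> J \<subseteq> J' \<Longrightarrow> J' = J"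
    using exists_maximal_ideal_in[of "range I"] by blast
  then obtain k where k: "J = I k" by auto
  have stable: "I (Suc k) = I k" using J(2) mono[of k] k by blast
  define w where "w = (a [^]\<^bsub>R\<^esub> k) \<odot>\<^bsub>M\<^esub> z"
  have w: "w \<in> carrier M" unfolding w_def using a z by simp
  have "w = \<zero>\<^bsub>M\<^esub>"
  proof (rule ccontr)
    assume "w \<noteq> \<zero>\<^bsub>M\<^esub>"
    then obtain b where b: "b \<in> carrier R" "b \<odot>\<^bsub>M\<^esub> w \<notin> {\<zero>\<^bsub>M\<^esub>}"
      "colon R M {\<zero>\<^bsub>M\<^esub>} w \<subseteq> colon R M {\<zero>\<^bsub>M\<^esub>} (b \<odot>\<^bsub>M\<^esub> w)"
      "primeideal (colon R M {\<zero>\<^bsub>M\<^esub>} (b \<odot>\<^bsub>M\<^esub> w)) R"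
      using exists_prime_colon[OF noeth zero_submodule w] by auto
    then have "colon R M {\<zero>\<^bsub>M\<^esub>} (b \<odot>\<^bsub>M\<^esub> w) = p" using AM w unfolding Ass_colon by auto
    then have "b \<odot>\<^bsub>M\<^esub> (a \<odot>\<^bsub>M\<^esub> w) = \<zero>\<^bsub>M\<^esub>" using a b(1) w smult_comm unfolding colon_def by auto
    then have "b \<in> I k" using stable b(1) unfolding I_def step w_def[symmetric] colon_def by auto
    then show False using b(2) unfolding I_def w_def[symmetric] colon_def by simp
  qed
  then show ?thesis unfolding w_def by blast
qed

primrec power_torsion :: "('a,'c) ring_scheme \<Rightarrow> ('a,'b,'e) module_scheme \<Rightarrow> 'a set \<Rightarrow> nat \<Rightarrow> 'b set" where
  "power_torsion R M I 0 = {\<zero>\<^bsub>M\<^esub>}"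
| "power_torsion R M I (Suc k) = {z \<in> carrier M. \<forall>a\<in>I. a \<odot>\<^bsub>M\<^esub> z \<in> power_torsion R M I k}"

context module
begin

lemma power_torsion_submodule:
  assumes I: "I \<subseteq> carrier R"
  shows "submodule (power_torsion R M I k) R M"
proof (induction k)
  case 0
  then show ?case using zero_submodule by simp
next
  case (Suc k)
  note N = Suc.IH
  show ?case unfolding power_torsion.simps
  proof (rule submoduleI)
    fix u assume "u \<in> {z \<in> carrier M. \<forall>a\<in>I. a \<odot>\<^bsub>M\<^esub> z \<in> power_torsion R M I k}"
    then show "\<ominus>\<^bsub>M\<^esub> u \<in> {z \<in> carrier M. \<forall>a\<in>I. a \<odot>\<^bsub>M\<^esub> z \<in> power_torsion R M I k}"
      using I submoduleE(3)[OF N] by (auto simp: smult_r_minus)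
  next
    fix u v assume "u \<in> {z \<in> carrier M. \<forall>a\<in>I. a \<odot>\<^bsub>M\<^esub> z \<in> power_torsion R M I k}"
      "v \<in> {z \<in> carrier M. \<forall>a\<in>I. a \<odot>\<^bsub>M\<^esub> z \<in> power_torsion R M I k}"
    then show "u \<oplus>\<^bsub>M\<^esub> v \<in> {z \<in> carrier M. \<forall>a\<in>I. a \<odot>\<^bsub>M\<^esub> z \<in> power_torsion R M I k}"
      using I submoduleE(5)[OF N] by (auto simp: smult_r_distr)
  next
    fix b u assume b: "b \<in> carrier R" and u: "u \<in> {z \<in> carrier M. \<forall>a\<in>I. a \<odot>\<^bsub>M\<^esub> z \<in> power_torsion R M I k}"
    have "a \<odot>\<^bsub>M\<^esub> (b \<odot>\<^bsub>M\<^esub> u) = b \<odot>\<^bsub>M\<^esub> (a \<odot>\<^bsub>M\<^esub> u)" if "a \<in> I" for a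
      using smult_comm[of a b u] I that b u by auto
    then show "b \<odot>\<^bsub>M\<^esub> u \<in> {z \<in> carrier M. \<forall>a\<in>I. a \<odot>\<^bsub>M\<^esub> z \<in> power_torsion R M I k}"
      using submoduleE(4)[OF N b] u b by auto
  qed (use I submodule_zero[OF N] in auto)
qed

lemma power_torsion_Suc_mono:
  assumes "I \<subseteq> carrier R"
  shows "power_torsion R M I k \<subseteq> power_torsion R M I (Suc k)"
proof (induction k)
  case 0
  then show ?case using assms by auto
next
  case (Suc k)
  then show ?case by auto
qed

end

text \<open>Once the chain \<open>(0 :\<^sub>M p\<^sup>k)\<close> stops growing it is all of \<open>M\<close>: otherwise some element
  outside has a prime colon ideal \<open>q\<close>, which contains \<open>p\<close> by nilpotence, so that element lies in
  the next member of the chain.\<close>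

lemma power_torsion_stable_eq_carrier:
  fixes M :: "('a,'b) module"
  assumes M: "module R M" and noeth: "noetherian_ring R"
    and p: "primeideal p R" and AM: "Ass R M \<subseteq> {p}"
    and stable: "power_torsion R M p (Suc k) = power_torsion R M p k"
  shows "power_torsion R M p k = carrier M"
proof (rule ccontr)
  interpret module R M by fact
  have psub: "p \<subseteq> carrier R" using ideal.Icarr[OF primeideal.axioms(1)[OF p]] by blast
  let ?T = "power_torsion R M p k"
  have T: "submodule ?T R M" using power_torsion_submodule[OF psub] .
  assume "?T \<noteq> carrier M"
  then obtain z where z: "z \<in> carrier M" "z \<notin> ?T" using submoduleE(1)[OF T] by blast
  then obtain b where b: "b \<in> carrier R" "b \<odot>\<^bsub>M\<^esub> z \<notin> ?T" "primeideal (colon R M ?T (b \<odot>\<^bsub>M\<^esub> z)) R"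
    using exists_prime_colon[OF noeth T] by metis
  let ?y = "b \<odot>\<^bsub>M\<^esub> z"
  have y: "?y \<in> carrier M" using b z by simp
  have "a \<in> colon R M ?T ?y" if a: "a \<in> p" for a
  proof -
    have aR: "a \<in> carrier R" using a psub by blast
    obtain e :: nat where "(a [^]\<^bsub>R\<^esub> e) \<odot>\<^bsub>M\<^esub> ?y = \<zero>\<^bsub>M\<^esub>"
      using smult_pow_eq_zero_if_Ass_subset[OF M noeth AM a aR y] by blast
    then have "a [^]\<^bsub>R\<^esub> e \<in> colon R M ?T ?y" using aR submodule_zero[OF T] unfolding colon_def by auto
    then show ?thesis using primeideal.nat_pow_mem_imp_mem[OF b(3) aR] by blast
  qed
  then have "?y \<in> power_torsion R M p (Suc k)" using y unfolding colon_def by auto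
  then show False using stable b(2) by (simp del: power_torsion.simps)
qed

lemma power_torsion_eq_carrier:
  fixes M :: "('a,'b) module"
  assumes M: "module R M" and noeth: "noetherian_ring R" and fg: "fg_module R M"
    and p: "primeideal p R" and AM: "Ass R M \<subseteq> {p}"
  obtains k where "power_torsion R M p k = carrier M"
proof -
  interpret module R M by fact
  have psub: "p \<subseteq> carrier R" using ideal.Icarr[OF primeideal.axioms(1)[OF p]] by blast
  let ?T = "power_torsion R M p"
  obtain T where T: "T \<in> range ?T" "\<And>W. W \<in> range ?T \<Longrightarrow> T \<subseteq> W \<Longrightarrow> W = T"
    using noetherian_exists_maximal_submodule[OF M noeth fg, of "range ?T"]
      power_torsion_submodule[OF psub] by blast
  then obtain k where k: "T = ?T k" by auto
  have "?T (Suc k) = ?T k" using T(2) power_torsion_Suc_mono[OF psub, of k] k by blast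
  then show ?thesis using that power_torsion_stable_eq_carrier[OF M noeth p AM] by blast
qed

text \<open>Take \<open>N\<close> maximal with \<open>p \<notin> Ass N\<close>.\<close>

lemma exists_submodule_coprimary_quotient:
  fixes M :: "('a,'b) module"
  assumes M: "module R M" and noeth: "noetherian_ring R" and fg: "fg_module R M" and p: "p \<in> Ass R M"
  obtains N where "submodule N R M" "Ass R (M\<lparr>carrier := N\<rparr>) \<subseteq> Ass R M - {p}"
    "Ass R (quot_module M N) \<subseteq> {p}"
proof -
  interpret module R M by fact
  define Ns where "Ns = {N. submodule N R M \<and> p \<notin> Ass R (M\<lparr>carrier := N\<rparr>)}"
  have "{\<zero>\<^bsub>M\<^esub>} \<in> Ns" unfolding Ns_def using zero_submodule Ass_zero_submodule[OF M] by auto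
  then obtain N where N: "N \<in> Ns" "\<And>W. W \<in> Ns \<Longrightarrow> N \<subseteq> W \<Longrightarrow> W = N"
    using noetherian_exists_maximal_submodule[OF M noeth fg, of Ns] unfolding Ns_def by blast
  have subN: "submodule N R M" and pN: "p \<notin> Ass R (M\<lparr>carrier := N\<rparr>)" using N(1) unfolding Ns_def by auto
  have "P = p" if P: "P \<in> Ass R (quot_module M N)" for P
  proof -
    obtain x where Pp: "primeideal P R" and x: "x \<in> carrier M" "P = colon R M N x"
      using P unfolding Ass_quot_module[OF M subN] by blast
    have "x \<notin> N" using not_prime_colon_mem[OF M subN] Pp x(2) by blast
    then have "plus_cyclic R M N x \<notin> Ns"
      using N(2) plus_cyclic_superset[OF subN x(1)] by blast
    then have "p \<in> Ass R (M\<lparr>carrier := plus_cyclic R M N x\<rparr>)"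
      unfolding Ns_def using plus_cyclic_submodule[OF subN x(1)] by blast
    then show "P = p" using Ass_plus_cyclic[OF M subN x(1)] Pp x(2) pN by blast
  qed
  then show ?thesis using that subN pN Ass_submodule_subset[OF M subN] by blast
qed

section \<open>Subcategories closed under submodules and extensions\<close>

locale sub_ext_class = noetherian_ring R + cring R for R :: "'a ring" (structure) +
  fixes D :: "'a fgmod set"
  assumes sub_ext_closed: "sub_ext_closed R D"
begin

abbreviation AssD :: "'a set set" where "AssD \<equiv> \<Union>M\<in>D. Ass R M"

lemma class_module: "M \<in> D \<Longrightarrow> module R M"
  and class_fg: "M \<in> D \<Longrightarrow> fg_module R M"
  using sub_ext_closed unfolding sub_ext_closed_def by blast+

lemma class_iso: "M \<in> D \<Longrightarrow> module R N \<Longrightarrow> mod_iso R M N f \<Longrightarrow> N \<in> D"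
  using sub_ext_closed unfolding sub_ext_closed_def by blast

lemma class_submodule: "M \<in> D \<Longrightarrow> submodule H R M \<Longrightarrow> M\<lparr>carrier := H\<rparr> \<in> D"
  using sub_ext_closed unfolding sub_ext_closed_def by blast

lemma class_extension:
  "L \<in> D \<Longrightarrow> N \<in> D \<Longrightarrow> module R M \<Longrightarrow> fg_module R M \<Longrightarrow> short_exact R L M N f g \<Longrightarrow> M \<in> D"
  using sub_ext_closed unfolding sub_ext_closed_def by blast

lemma trivial_in_class:
  assumes Z: "module R Z" and triv: "carrier Z = {\<zero>\<^bsub>Z\<^esub>}"
  shows "Z \<in> D"
proof -
  obtain M where M: "M \<in> D" using sub_ext_closed unfolding sub_ext_closed_def by blast
  interpret M: module R M using class_module[OF M] .
  interpret Z: module R Z by fact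
  have "mod_iso R (M\<lparr>carrier := {\<zero>\<^bsub>M\<^esub>}\<rparr>) Z (\<lambda>_. \<zero>\<^bsub>Z\<^esub>)"
    using triv unfolding mod_iso_def mod_hom_def bij_betw_def by auto
  then show ?thesis using class_iso[OF class_submodule[OF M M.zero_submodule] Z] by blast
qed

lemma class_submodule_of_submodule:
  assumes L: "module R L" and H: "submodule H R L" "L\<lparr>carrier := H\<rparr> \<in> D"
    and W: "submodule W R L" "W \<subseteq> H"
  shows "L\<lparr>carrier := W\<rparr> \<in> D"
  using class_submodule[OF H(2), of W] module.submodule_carrier_update_iff[OF L H(1)] W by simp

lemma in_class_if_smult_injective:
  fixes L :: "'a fgmod"
  assumes L: "module R L" and H: "submodule H R L"
    and H': "submodule H' R L" "L\<lparr>carrier := H'\<rparr> \<in> D"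
    and c: "c \<in> carrier R" "(\<lambda>z. c \<odot>\<^bsub>L\<^esub> z) ` H \<subseteq> H'"
    and inj: "\<And>z. z \<in> H \<Longrightarrow> c \<odot>\<^bsub>L\<^esub> z = \<zero>\<^bsub>L\<^esub> \<Longrightarrow> z = \<zero>\<^bsub>L\<^esub>"
  shows "L\<lparr>carrier := H\<rparr> \<in> D"
proof -
  have cH: "submodule ((\<lambda>z. c \<odot>\<^bsub>L\<^esub> z) ` H) R L" using module.smult_image_submodule[OF L H c(1)] .
  have mods: "module R (L\<lparr>carrier := H\<rparr>)" "module R (L\<lparr>carrier := (\<lambda>z. c \<odot>\<^bsub>L\<^esub> z) ` H\<rparr>)"
    using submodule.submodule_is_module[OF H L] submodule.submodule_is_module[OF cH L] by auto
  have "L\<lparr>carrier := (\<lambda>z. c \<odot>\<^bsub>L\<^esub> z) ` H\<rparr> \<in> D"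
    using class_submodule_of_submodule[OF L H' cH c(2)] .
  moreover have "mod_iso R (L\<lparr>carrier := (\<lambda>z. c \<odot>\<^bsub>L\<^esub> z) ` H\<rparr>) (L\<lparr>carrier := H\<rparr>)
      (inv_into (carrier (L\<lparr>carrier := H\<rparr>)) (\<lambda>z. c \<odot>\<^bsub>L\<^esub> z))"
    using mod_iso_sym[OF mods mod_iso_smult[OF L H c(1) inj]] .
  ultimately show ?thesis using class_iso mods(1) by blast
qed

text \<open>If \<open>(N : y) = ann x\<^sub>0\<close> with \<open>x\<^sub>0\<close> in a module of \<open>D\<close>, then \<open>N + R y\<close> is an extension of \<open>N\<close>
  by \<open>R x\<^sub>0\<close>.\<close>

lemma plus_cyclic_in_class:
  fixes L :: "'a fgmod"
  assumes L: "module R L" "fg_module R L" and N: "submodule N R L" "L\<lparr>carrier := N\<rparr> \<in> D"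
    and y: "y \<in> carrier L" and q: "colon R L N y \<in> AssD"
  shows "L\<lparr>carrier := plus_cyclic R L N y\<rparr> \<in> D"
proof -
  obtain M0 x0 where M0: "M0 \<in> D" "x0 \<in> carrier M0" "colon R L N y = colon R M0 {\<zero>\<^bsub>M0\<^esub>} x0"
    using q unfolding Ass_colon by blast
  interpret M0: module R M0 using class_module[OF M0(1)] .
  obtain g where se: "short_exact R (L\<lparr>carrier := N\<rparr>) (L\<lparr>carrier := plus_cyclic R L N y\<rparr>)
      (M0\<lparr>carrier := plus_cyclic R M0 {\<zero>\<^bsub>M0\<^esub>} x0\<rparr>) id g"
    using short_exact_plus_cyclic[OF L(1) N(1) y M0.module_axioms M0(2,3)] by blast
  have "M0\<lparr>carrier := plus_cyclic R M0 {\<zero>\<^bsub>M0\<^esub>} x0\<rparr> \<in> D"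
    using class_submodule[OF M0(1) M0.plus_cyclic_submodule[OF M0.zero_submodule M0(2)]] .
  moreover have H: "submodule (plus_cyclic R L N y) R L" using module.plus_cyclic_submodule[OF L(1) N(1) y] .
  ultimately show ?thesis
    using class_extension[OF N(2) _ submodule.submodule_is_module[OF H L(1)]
        fg_submodule[OF L(1) noetherian_ring_axioms L(2) H] se] by blast
qed

text \<open>Add the generators one at a time. When \<open>x\<close> is added to \<open>N\<close>, either some \<open>c \<notin> p\<close> has
  \<open>c x \<in> N\<close>, and multiplication by \<open>c\<close> embeds \<open>N + R x\<close> into \<open>N\<close>, or \<open>(N : x) = p\<close>.\<close>

lemma torsion_free_in_class:
  fixes L :: "'a fgmod"
  assumes L: "module R L" "fg_module R L" and p: "p \<in> AssD" and S: "finite S" "S \<subseteq> carrier L"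
    and ann: "\<And>z. z \<in> span R L S \<Longrightarrow> z \<noteq> \<zero>\<^bsub>L\<^esub> \<Longrightarrow> colon R L {\<zero>\<^bsub>L\<^esub>} z = p"
  shows "L\<lparr>carrier := span R L S\<rparr> \<in> D"
  using S ann
proof (induction S rule: finite_induct)
  case empty
  then show ?case
    using trivial_in_class submodule.submodule_is_module[OF module.zero_submodule[OF L(1)] L(1)]
    by (simp add: module.span_empty[OF L(1)])
next
  case (insert x S)
  interpret L: module R L by (fact L(1))
  have S: "finite S" "S \<subseteq> carrier L" and x: "x \<in> carrier L" using insert by auto
  let ?H' = "span R L S"
  have H': "submodule ?H' R L" using L.span_submodule[OF S] .
  have H: "span R L (insert x S) = plus_cyclic R L ?H' x" using L.span_insert[OF S x] .
  have Hsub: "submodule (plus_cyclic R L ?H' x) R L" using L.plus_cyclic_submodule[OF H' x] .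
  have "?H' \<subseteq> span R L (insert x S)" and xH: "x \<in> span R L (insert x S)"
    unfolding H using L.plus_cyclic_superset[OF H' x] by auto
  then have IH: "L\<lparr>carrier := ?H'\<rparr> \<in> D" using insert.IH S(2) insert.prems by blast
  have p_carrier: "p \<subseteq> carrier R" using p unfolding Ass_colon colon_def by blast
  show ?case
  proof (cases "\<exists>c\<in>carrier R. c \<notin> p \<and> c \<odot>\<^bsub>L\<^esub> x \<in> ?H'")
    case True
    then obtain c where c: "c \<in> carrier R" "c \<notin> p" "c \<odot>\<^bsub>L\<^esub> x \<in> ?H'" by blast
    have "z = \<zero>\<^bsub>L\<^esub>" if "z \<in> plus_cyclic R L ?H' x" "c \<odot>\<^bsub>L\<^esub> z = \<zero>\<^bsub>L\<^esub>" for z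
      using insert.prems(2)[of z] that c unfolding H colon_def by auto
    then show ?thesis
      using in_class_if_smult_injective[OF L(1) Hsub H' IH c(1) L.smult_plus_cyclic_subset[OF H' x c(1,3)]] H by simp
  next
    case False
    have "a \<odot>\<^bsub>L\<^esub> x = \<zero>\<^bsub>L\<^esub>" if "a \<in> p" for a
      using insert.prems(2)[OF xH] that p_carrier x unfolding colon_def by (cases "x = \<zero>\<^bsub>L\<^esub>") auto
    then have "colon R L ?H' x = p"
      using False p_carrier L.submodule_zero[OF H'] unfolding colon_def by auto
    then show ?thesis using plus_cyclic_in_class[OF L H' IH x] p H by simp
  qed
qed

text \<open>The exact sequences \<open>0 \<rightarrow> (0 :\<^sub>H a) \<rightarrow> H \<rightarrow> a H \<rightarrow> 0\<close>, one generator \<open>a\<close> at a time.\<close>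

lemma in_class_if_annihilator_chain:
  fixes L :: "'a fgmod"
  assumes L: "module R L" "fg_module R L" and G: "finite G" "G \<subseteq> carrier R"
  shows "submodule H R L \<Longrightarrow> L\<lparr>carrier := {z \<in> H. \<forall>a\<in>G. a \<odot>\<^bsub>L\<^esub> z = \<zero>\<^bsub>L\<^esub>}\<rparr> \<in> D \<Longrightarrow>
    (\<And>a. a \<in> G \<Longrightarrow> L\<lparr>carrier := (\<lambda>z. a \<odot>\<^bsub>L\<^esub> z) ` H\<rparr> \<in> D) \<Longrightarrow> L\<lparr>carrier := H\<rparr> \<in> D"
  using G
proof (induction G arbitrary: H rule: finite_induct)
  case empty
  then show ?case by simp
next
  case (insert a G)
  interpret L: module R L by (fact L(1))
  note H = insert.prems(1)
  have a: "a \<in> carrier R" and G: "G \<subseteq> carrier R" using insert.prems(4) by auto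
  let ?K = "{z \<in> H. a \<odot>\<^bsub>L\<^esub> z = \<zero>\<^bsub>L\<^esub>}"
  have K: "submodule ?K R L" using L.annihilated_submodule[OF H, of "{a}"] a by simp
  have "{z \<in> ?K. \<forall>b\<in>G. b \<odot>\<^bsub>L\<^esub> z = \<zero>\<^bsub>L\<^esub>} = {z \<in> H. \<forall>b\<in>insert a G. b \<odot>\<^bsub>L\<^esub> z = \<zero>\<^bsub>L\<^esub>}" by auto
  moreover have "L\<lparr>carrier := (\<lambda>z. b \<odot>\<^bsub>L\<^esub> z) ` ?K\<rparr> \<in> D" if b: "b \<in> G" for b
    using class_submodule_of_submodule[OF L(1) L.smult_image_submodule[OF H] insert.prems(3)
        L.smult_image_submodule[OF K]] b G by blast
  ultimately have "L\<lparr>carrier := ?K\<rparr> \<in> D" using insert.IH[OF K] insert.prems(2) G by simp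
  then show ?case
    using class_extension[OF _ insert.prems(3)[of a] submodule.submodule_is_module[OF H L(1)]
        fg_submodule[OF L(1) noetherian_ring_axioms L(2) H] short_exact_smult[OF L(1) H a]] by simp
qed

text \<open>Induction on \<open>k\<close>: the generators of \<open>p\<close> map \<open>H \<subseteq> (0 : p\<^sup>k\<^sup>+\<^sup>1)\<close> into \<open>(0 : p\<^sup>k)\<close>, and the
  part of \<open>H\<close> they kill is handled by \<open>torsion_free_in_class\<close>.\<close>

lemma power_torsion_submodule_in_class:
  fixes L :: "'a fgmod"
  assumes L: "module R L" "fg_module R L" and p: "p \<in> AssD"
    and colon_le: "\<And>z. z \<in> carrier L \<Longrightarrow> z \<noteq> \<zero>\<^bsub>L\<^esub> \<Longrightarrow> colon R L {\<zero>\<^bsub>L\<^esub>} z \<subseteq> p"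
  shows "submodule H R L \<Longrightarrow> H \<subseteq> power_torsion R L p k \<Longrightarrow> L\<lparr>carrier := H\<rparr> \<in> D"
proof (induction k arbitrary: H)
  interpret L: module R L by (fact L(1))
  have pI: "ideal p R" using p unfolding Ass_colon using primeideal.axioms(1) by blast
  have p_carrier: "p \<subseteq> carrier R" using ideal.Icarr[OF pI] by blast
  {
    case 0
    then have "H = {\<zero>\<^bsub>L\<^esub>}" using L.submodule_zero by auto
    then show ?case using trivial_in_class submodule.submodule_is_module[OF 0(1) L(1)] by simp
  next
    case (Suc k)
    obtain G where G: "G \<subseteq> carrier R" "finite G" "p = Idl G" using finetely_gen[OF pI] by blast
    let ?K = "{z \<in> H. \<forall>a\<in>G. a \<odot>\<^bsub>L\<^esub> z = \<zero>\<^bsub>L\<^esub>}"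
    have K: "submodule ?K R L" using L.annihilated_submodule[OF Suc.prems(1) G(1)] .
    obtain T where T: "finite T" "T \<subseteq> ?K" "?K = span R L T"
      using fg_submodule[OF L(1) noetherian_ring_axioms L(2) K] fg_submodule_iff_span[OF L(1) K] by blast
    have "colon R L {\<zero>\<^bsub>L\<^esub>} z = p" if "z \<in> span R L T" "z \<noteq> \<zero>\<^bsub>L\<^esub>" for z
    proof
      have zK: "z \<in> ?K" "z \<in> carrier L" using that T(3) L.submoduleE(1)[OF K] by auto
      then show "colon R L {\<zero>\<^bsub>L\<^esub>} z \<subseteq> p" using colon_le that(2) by blast
      have "G \<subseteq> colon R L {\<zero>\<^bsub>L\<^esub>} z" using zK G(1) unfolding colon_def by auto
      then show "p \<subseteq> colon R L {\<zero>\<^bsub>L\<^esub>} z"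
        using genideal_minimal[OF L.colon_ideal[OF L.zero_submodule zK(2)]] G(3) by blast
    qed
    then have "L\<lparr>carrier := ?K\<rparr> \<in> D"
      using torsion_free_in_class[OF L p T(1)] T L.submoduleE(1)[OF K] by auto
    moreover have "L\<lparr>carrier := (\<lambda>z. a \<odot>\<^bsub>L\<^esub> z) ` H\<rparr> \<in> D" if a: "a \<in> G" for a
    proof (rule Suc.IH)
      show "submodule ((\<lambda>z. a \<odot>\<^bsub>L\<^esub> z) ` H) R L" using L.smult_image_submodule[OF Suc.prems(1)] a G(1) by blast
      have "a \<in> p" using genideal_self[OF G(1)] G(3) a by blast
      then show "(\<lambda>z. a \<odot>\<^bsub>L\<^esub> z) ` H \<subseteq> power_torsion R L p k" using Suc.prems(2) by auto
    qed
    ultimately show ?case using in_class_if_annihilator_chain[OF L G(2,1) Suc.prems(1)] by blast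
  }
qed

lemma coprimary_in_class:
  fixes L :: "'a fgmod"
  assumes L: "module R L" "fg_module R L" and p: "p \<in> AssD" and AL: "Ass R L \<subseteq> {p}"
  shows "L \<in> D"
proof -
  interpret L: module R L by (fact L(1))
  have "primeideal p R" using p unfolding Ass_colon by blast
  then obtain k where k: "power_torsion R L p k = carrier L"
    using power_torsion_eq_carrier[OF L(1) noetherian_ring_axioms L(2) _ AL] by blast
  have "colon R L {\<zero>\<^bsub>L\<^esub>} z \<subseteq> p" if "z \<in> carrier L" "z \<noteq> \<zero>\<^bsub>L\<^esub>" for z
    using Ass_exists_superset[OF L(1) noetherian_ring_axioms that] AL by blast
  moreover have "carrier L \<subseteq> power_torsion R L p k" using k by simp
  ultimately have "L\<lparr>carrier := carrier L\<rparr> \<in> D"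
    using power_torsion_submodule_in_class[OF L p _ L.carrier_is_submodule] by blast
  then show ?thesis by simp
qed

end

section \<open>The classification\<close>

definition Ass_class :: "('a, 'c) ring_scheme \<Rightarrow> 'a set set \<Rightarrow> 'a fgmod set" where
  "Ass_class A \<Phi> = {M. module A M \<and> fg_module A M \<and> Ass A M \<subseteq> \<Phi>}"

text \<open>Induction on the number of associated primes: split off a coprimary quotient.\<close>

lemma (in sub_ext_class) class_eq_Ass_class: "D = Ass_class R AssD"
proof
  show "D \<subseteq> Ass_class R AssD" unfolding Ass_class_def using class_module class_fg by blast
  have "M \<in> D" if "M \<in> Ass_class R AssD" and "card (Ass R M) = n" for M n
    using that
  proof (induction n arbitrary: M rule: less_induct)
    case (less n M)
    then have M: "module R M" "fg_module R M" and AM: "Ass R M \<subseteq> AssD" unfolding Ass_class_def by auto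
    show "M \<in> D"
    proof (cases "Ass R M = {}")
      case True
      then show ?thesis
        using trivial_in_class[OF M(1)] Ass_empty_imp_trivial[OF M(1) noetherian_ring_axioms] by blast
    next
      case False
      then obtain p where p: "p \<in> Ass R M" by blast
      obtain N where N: "submodule N R M" "Ass R (M\<lparr>carrier := N\<rparr>) \<subseteq> Ass R M - {p}"
        "Ass R (quot_module M N) \<subseteq> {p}"
        using exists_submodule_coprimary_quotient[OF M(1) noetherian_ring_axioms M(2) p] by blast
      have "Ass R (M\<lparr>carrier := N\<rparr>) \<subset> Ass R M" using N(2) p by blast
      then have "card (Ass R (M\<lparr>carrier := N\<rparr>)) < n"
        using psubset_card_mono[OF finite_Ass[OF M(1) noetherian_ring_axioms M(2)]] less.prems(2) by blast
      moreover have "M\<lparr>carrier := N\<rparr> \<in> Ass_class R AssD"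
        using submodule.submodule_is_module[OF N(1) M(1)] fg_submodule[OF M(1) noetherian_ring_axioms M(2) N(1)]
          N(2) AM unfolding Ass_class_def by auto
      ultimately have "M\<lparr>carrier := N\<rparr> \<in> D" using less.IH by blast
      moreover have "quot_module M N \<in> D"
        using coprimary_in_class[OF quot_module_module[OF M(1) N(1)] fg_quot_module[OF M(1) N(1) M(2)] _ N(3)]
          p AM by blast
      ultimately show ?thesis using class_extension[OF _ _ M short_exact_quot_module[OF M(1) N(1)]] by blast
    qed
  qed
  then show "Ass_class R AssD \<subseteq> D" by blast
qed

lemma sub_ext_closed_Ass_class:
  fixes A :: "'a ring"
  assumes A: "cring A" "noetherian_ring A"
  shows "sub_ext_closed A (Ass_class A \<Phi>)"
  unfolding sub_ext_closed_def
proof (intro conjI ballI allI impI)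
  interpret cring A by (fact A(1))
  show "Ass_class A \<Phi> \<noteq> {}"
    using residue_module_module[OF oneideal] fg_residue_module[OF oneideal] Ass_residue_module_carrier
    unfolding Ass_class_def by blast
  fix M :: "'a fgmod" assume "M \<in> Ass_class A \<Phi>"
  then have M: "module A M" "fg_module A M" "Ass A M \<subseteq> \<Phi>" unfolding Ass_class_def by auto
  then show "module A M" "fg_module A M" by auto
  show "N \<in> Ass_class A \<Phi>" if iso: "module A N \<and> (\<exists>f. mod_iso A M N f)" for N
  proof -
    obtain f where N: "module A N" and f: "mod_iso A M N f" using iso by blast
    then have "fg_module A N"
      using fg_module_hom_image[OF M(1) N _ _ M(2)] unfolding mod_iso_def bij_betw_def by blast
    then show ?thesis using N M(3) Ass_mod_iso[OF M(1) N f] unfolding Ass_class_def by simp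
  qed
  show "M\<lparr>carrier := H\<rparr> \<in> Ass_class A \<Phi>" if H: "submodule H A M" for H
    using submodule.submodule_is_module[OF H M(1)] fg_submodule[OF M(1) A(2) M(2) H]
      Ass_submodule_subset[OF M(1) H] M(3) unfolding Ass_class_def by auto
next
  fix L N M :: "'a fgmod"
  assume "L \<in> Ass_class A \<Phi>" "N \<in> Ass_class A \<Phi>" "module A M \<and> fg_module A M \<and> (\<exists>f g. short_exact A L M N f g)"
  then show "M \<in> Ass_class A \<Phi>" using Ass_short_exact unfolding Ass_class_def by blast
qed

lemma (in cring) UN_Ass_Ass_class:
  assumes "\<Phi> \<subseteq> Spec R"
  shows "(\<Union>M\<in>Ass_class R \<Phi>. Ass R M) = \<Phi>"
proof
  show "(\<Union>M\<in>Ass_class R \<Phi>. Ass R M) \<subseteq> \<Phi>" unfolding Ass_class_def by blast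
  show "\<Phi> \<subseteq> (\<Union>M\<in>Ass_class R \<Phi>. Ass R M)"
  proof
    fix p assume "p \<in> \<Phi>"
    then have p: "primeideal p R" using assms unfolding Spec_def by blast
    have I: "ideal p R" using primeideal.axioms(1)[OF p] .
    have "residue_module R p \<in> Ass_class R \<Phi>"
      using residue_module_module[OF I] fg_residue_module[OF I] Ass_residue_module_prime[OF p] \<open>p \<in> \<Phi>\<close>
      unfolding Ass_class_def by auto
    then show "p \<in> (\<Union>M\<in>Ass_class R \<Phi>. Ass R M)" using Ass_residue_module_prime[OF p] by blast
  qed
qed

theorem corollary2p5:
  fixes A :: "'a ring"
  assumes "cring A" and "noetherian_ring A"
  shows "bij_betw (\<lambda>D. \<Union>M\<in>D. Ass A M)
           {D :: 'a fgmod set. sub_ext_closed A D}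
           (Pow (Spec A))"
proof (rule bij_betw_byWitness[where f' = "Ass_class A"])
  show "\<forall>D\<in>{D. sub_ext_closed A D}. Ass_class A (\<Union>M\<in>D. Ass A M) = D"
  proof
    fix D :: "'a fgmod set" assume "D \<in> {D. sub_ext_closed A D}"
    then interpret sub_ext_class A D
      using assms by (simp add: sub_ext_class_def sub_ext_class_axioms_def cring.axioms)
    show "Ass_class A AssD = D" using class_eq_Ass_class by simp
  qed
  show "\<forall>\<Phi>\<in>Pow (Spec A). (\<Union>M\<in>Ass_class A \<Phi>. Ass A M) = \<Phi>"
    using cring.UN_Ass_Ass_class[OF assms(1)] by blast
  show "(\<lambda>D. \<Union>M\<in>D. Ass A M) ` {D. sub_ext_closed A D} \<subseteq> Pow (Spec A)"
    unfolding Ass_def Spec_def by blast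
  show "Ass_class A ` Pow (Spec A) \<subseteq> {D. sub_ext_closed A D}"
    using sub_ext_closed_Ass_class[OF assms] by blast
qed

end
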